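(* Let $x_0\in W^2_\infty(0,1)$ be positive with $x_0(0)>0$, let $F'(x_0)$ be the operator $[F'(x_0)h](s)=2\int_0^s x_0(s-t)h(t)\,dt$, let $\sigma>0$ and $m\in\mathbb{N}$ with $m\ge\sigma$, and let $Q_m$, $Q_m^\sigma$ be as follows: $[Q_mx](s)=m\int_{\Delta_i}x(t)\,dt$ and $[Q_m^\sigma x](s)=e^{\sigma s}m\int_{\Delta_i}e^{-\sigma t}x(t)\,dt$ for $s\in\Delta_i=[(i-1)/m,i/m)$. Suppose $Q_m^\sigma F'(x_0)Q_m^\sigma$ is accretive with respect to $\langle\cdot,\cdot\rangle_\sigma$. Then $Q_mF'(x_0)Q_m+\frac{8\sigma\|x_0\|_0}{m}\mathrm{Id}$ is accretive with respect to $\langle\cdot,\cdot\rangle_\sigma$. Consequently, for every $\alpha\ge\frac{16\sigma\|x_0\|_0}{m}$, $$\|(\alpha\mathrm{Id}+Q_mF'(x_0)Q_m)^{-1}\|_{\sigma\to\sigma}\le\frac2\alpha\quad\text{and}\quad\|(\alpha\mathrm{Id}+Q_mF'(x_0)Q_m)^{-1}Q_mF'(x_0)Q_m\|_{\sigma\to\sigma}\le2.$$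
   Context: $\langle x,y\rangle_\sigma=\int_0^1e^{-2\sigma t}x(t)y(t)\,dt$, $\|\cdot\|_\sigma$ the induced norm, $\|\cdot\|_0$ the usual $L_2(0,1)$ norm, and $\|A\|_{\sigma\to\sigma}$ the induced operator norm. A linear operator $A$ is accretive w.r.t. $\langle\cdot,\cdot\rangle_\sigma$ if $\langle Av,v\rangle_\sigma\ge0$ for all $v\in L_2(0,1)$. *)

theory Defs
  imports "HOL-Analysis.Analysis"
begin

text \<open>Functions on (0,1) are represented as total functions real => real;
  only their values on [0,1] matter.\<close>

definition L2 :: "(real \<Rightarrow> real) \<Rightarrow> bool" where
  "L2 v \<longleftrightarrow> set_borel_measurable lborel {0..1} v
      \<and> set_integrable lborel {0..1} (\<lambda>t. (v t)^2)"

definition inner_sigma :: "real \<Rightarrow> (real \<Rightarrow> real) \<Rightarrow> (real \<Rightarrow> real) \<Rightarrow> real" where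
  "inner_sigma \<sigma> x y = (LBINT t:{0..1}. exp (- 2 * \<sigma> * t) * x t * y t)"

definition norm_sigma :: "real \<Rightarrow> (real \<Rightarrow> real) \<Rightarrow> real" where
  "norm_sigma \<sigma> x = sqrt (inner_sigma \<sigma> x x)"

definition norm0 :: "(real \<Rightarrow> real) \<Rightarrow> real" where
  "norm0 x = sqrt (LBINT t:{0..1}. (x t)^2)"

definition W2inf :: "(real \<Rightarrow> real) \<Rightarrow> bool" where
  "W2inf x \<longleftrightarrow> (\<exists>d L. (\<forall>t\<in>{0..1}. (x has_real_derivative d t) (at t within {0..1}))
      \<and> (\<forall>s\<in>{0..1}. \<forall>t\<in>{0..1}. \<bar>d s - d t\<bar> \<le> L * \<bar>s - t\<bar>))"

text \<open>Cell Delta_i = [(i-1)/m, i/m) containing s; the point s = 1 is assigned to the last cell.\<close>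
definition cell :: "nat \<Rightarrow> real \<Rightarrow> real set" where
  "cell m s = (let k = min (m - 1) (nat \<lfloor>real m * s\<rfloor>) in {real k / real m ..< real (k+1) / real m})"

definition Qm :: "nat \<Rightarrow> (real \<Rightarrow> real) \<Rightarrow> real \<Rightarrow> real" where
  "Qm m x s = real m * (LBINT t:cell m s. x t)"

definition Qms :: "real \<Rightarrow> nat \<Rightarrow> (real \<Rightarrow> real) \<Rightarrow> real \<Rightarrow> real" where
  "Qms \<sigma> m x s = exp (\<sigma> * s) * real m * (LBINT t:cell m s. exp (- \<sigma> * t) * x t)"

definition Fderiv :: "(real \<Rightarrow> real) \<Rightarrow> (real \<Rightarrow> real) \<Rightarrow> real \<Rightarrow> real" where
  "Fderiv x0 h s = 2 * (LBINT t:{0..s}. x0 (s - t) * h t)"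

definition accretive :: "real \<Rightarrow> ((real \<Rightarrow> real) \<Rightarrow> (real \<Rightarrow> real)) \<Rightarrow> bool" where
  "accretive \<sigma> A \<longleftrightarrow> (\<forall>v. L2 v \<longrightarrow> inner_sigma \<sigma> (A v) v \<ge> 0)"

definition ae_eq01 :: "(real \<Rightarrow> real) \<Rightarrow> (real \<Rightarrow> real) \<Rightarrow> bool" where
  "ae_eq01 f g \<longleftrightarrow> (AE t in lborel. t \<in> {0..1} \<longrightarrow> f t = g t)"

end

theory Submission
  imports Defs
begin

text \<open>
  On the uniform partition into cells \<Delta>_i both operators map into step functions, so their
  \<sigma>-forms are finite bilinear forms: with a_j, b_j, c_j the integrals of v, exp(-\<sigma>t) v and
  exp(-2\<sigma>t) v over \<Delta>_j,
    \<langle>Q_m F' Q_m v, v\<rangle>_\<sigma> = 2m^2 \<Sum> a_j \<kappa>_ij c_i   and   \<langle>Q^\<sigma>_m F' Q^\<sigma>_m v, v\<rangle>_\<sigma> = 2m^2 \<Sum> b_j \<lambda>_ij b_i,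
  where \<kappa>_ij and \<lambda>_ij integrate the kernels x0(r - t) and exp(-\<sigma>(r - t)) x0(r - t) over
  r \<in> \<Delta>_i, t \<in> \<Delta>_j, t \<le> r. Since exp(\<plusminus>\<sigma>t) varies by at most the factor exp(\<sigma>/m) on a cell,
  corresponding terms differ by at most 2(exp(\<sigma>/m) - 1) T_i T_j \<kappa>_ij, with T_i the integral of
  exp(-\<sigma>t)|v| over \<Delta>_i. The matrix \<kappa> is nonnegative with row and column sums at most
  (\<integral>x0)/m, so the Schur test and Cauchy-Schwarz on each cell bound the total difference by
  4(exp(\<sigma>/m) - 1) \<parallel>x0\<parallel>_0 \<parallel>v\<parallel>_\<sigma>^2 \<le> 8\<sigma>\<parallel>x0\<parallel>_0/m \<parallel>v\<parallel>_\<sigma>^2, using \<sigma> \<le> m.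
  Accretivity of \<alpha>/2 + Q_m F' Q_m then yields the resolvent bounds in the usual way, and
  solvability holds because \<kappa> is lower triangular with nonnegative diagonal.
\<close>

section \<open>Cells of the uniform partition\<close>

definition cell_index :: "nat \<Rightarrow> real \<Rightarrow> nat" where
  "cell_index m s = min (m - 1) (nat \<lfloor>real m * s\<rfloor>)"

definition cell_ivl :: "nat \<Rightarrow> nat \<Rightarrow> real set" where
  "cell_ivl m j = {real j / real m ..< real (j+1) / real m}"

lemma cell_eq_cell_ivl: "cell m s = cell_ivl m (cell_index m s)"
  by (simp add: cell_def cell_index_def cell_ivl_def Let_def)

lemma measurable_cell_index[measurable]: "cell_index m \<in> measurable borel (count_space UNIV)"
  unfolding cell_index_def by measurable

lemma borel_measurable_step[measurable]: "(\<lambda>t. (g::nat\<Rightarrow>real) (cell_index m t)) \<in> borel_measurable borel"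
  by (rule measurable_compose[OF measurable_cell_index]) simp

lemma sets_cell_ivl[measurable]: "cell_ivl m i \<in> sets borel"
  by (simp add: cell_ivl_def)

lemma cell_index_less: "m \<ge> 1 \<Longrightarrow> cell_index m t < m"
  unfolding cell_index_def by linarith

text \<open>The last cell also receives the point 1.\<close>
lemma cell_index_eq_iff:
  assumes m: "m \<ge> 1" and t: "0 \<le> t" "t \<le> 1"
  shows "cell_index m t = j \<longleftrightarrow> (j < m \<and> real j / real m \<le> t \<and> (t < real (j+1) / real m \<or> j = m - 1))"
proof -
  have mp: "real m > 0" using m by simp
  have le: "real j / real m \<le> t \<longleftrightarrow> real j \<le> real m * t" using mp by (simp add: field_simps)
  have lt: "t < real (j+1) / real m \<longleftrightarrow> real m * t < real j + 1" using mp by (simp add: field_simps)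
  have fl0: "\<lfloor>real m * t\<rfloor> \<ge> 0" using t mp by simp
  show ?thesis
    unfolding cell_index_def le lt
    using fl0 m
    by (auto simp: min_def nat_le_iff le_nat_iff floor_less_iff le_floor_iff split: if_splits)
     (linarith | (smt (verit) floor_le_iff le_floor_iff of_int_of_nat_eq of_nat_1 of_nat_add of_nat_diff))+
qed

lemma cell_ivl_subset: "i < m \<Longrightarrow> cell_ivl m i \<subseteq> {0..<1}"
  by (auto simp: cell_ivl_def divide_simps)

lemma cell_ivl_subset_01: "i < m \<Longrightarrow> cell_ivl m i \<subseteq> {0..1}"
  using cell_ivl_subset atLeastLessThan_subseteq_atLeastAtMost_iff by blast

lemma cell_index_cell_ivl:
  assumes i: "i < m" and t: "t \<in> cell_ivl m i"
  shows "cell_index m t = i"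
proof -
  have m: "m \<ge> 1" using i by simp
  have "t \<in> {0..<1}" using cell_ivl_subset[OF i] t by auto
  then show ?thesis using cell_index_eq_iff[OF m, of t i] i t by (auto simp: cell_ivl_def)
qed

lemma set_integral_cell_ivl_const: "i < m \<Longrightarrow> (LBINT r:cell_ivl m i. (c::real)) = c / real m"
  by (simp add: cell_ivl_def set_integral_const measure_def divide_simps)

lemma step_eq_sum_indicator:
  fixes \<gamma> :: "nat \<Rightarrow> real"
  assumes "m \<ge> 1"
  shows "x * \<gamma> (cell_index m t) = (\<Sum>j<m. \<gamma> j * (indicator {t. cell_index m t = j} t * x))"
proof -
  have "(\<Sum>j<m. \<gamma> j * (indicator {t. cell_index m t = j} t * x))
      = (\<Sum>j\<in>{cell_index m t}. \<gamma> j * (indicator {t. cell_index m t = j} t * x))"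
    by (rule sum.mono_neutral_right) (use cell_index_less[OF assms] in auto)
  then show ?thesis by simp
qed

lemma abs_step_le_sum: "m \<ge> 1 \<Longrightarrow> \<bar>(\<gamma>::nat \<Rightarrow> real) (cell_index m t)\<bar> \<le> (\<Sum>i<m. \<bar>\<gamma> i\<bar>)"
  by (rule member_le_sum) (auto simp: cell_index_less)

lemma continuous_on_UNIV_has_antiderivative:
  fixes g :: "real \<Rightarrow> real" assumes "continuous_on UNIV g"
  shows "\<exists>G. \<forall>x. (G has_real_derivative g x) (at x)"
proof -
  have "\<exists>F. \<forall>x :: real. -\<infinity> < x \<longrightarrow> x < \<infinity> \<longrightarrow> (F has_vector_derivative g x) (at x)"
    by (rule einterval_antiderivative) (use assms in \<open>auto simp: continuous_on_eq_continuous_at\<close>)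
  then show ?thesis by (auto simp: has_real_derivative_iff_has_vector_derivative)
qed

lemma set_integral_FTC_Icc:
  fixes g G :: "real \<Rightarrow> real"
  assumes "\<And>x. (G has_real_derivative g x) (at x)" "continuous_on UNIV g" "a \<le> b"
  shows "(LBINT t:{a..b}. g t) = G b - G a"
  unfolding set_lebesgue_integral_def
  by (rule integral_FTC_atLeastAtMost[OF assms(3)])
     (use assms in \<open>auto simp: has_real_derivative_iff_has_vector_derivative[symmetric]
        intro: has_field_derivative_at_within continuous_on_subset\<close>)

lemma set_integrable_continuous_subset:
  fixes f :: "real \<Rightarrow> real"
  assumes "continuous_on {a..b} f" "A \<in> sets borel" "A \<subseteq> {a..b}"
  shows "set_integrable lborel A f"
  by (rule set_integrable_subset[OF borel_integrable_atLeastAtMost'[OF assms(1)]]) (use assms in auto)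

lemma set_integrable_cell_ivl_continuous:
  fixes f :: "real \<Rightarrow> real"
  assumes "continuous_on UNIV f"
  shows "set_integrable lborel (cell_ivl m i) f"
  by (rule set_integrable_continuous_subset[where a="real i / real m" and b="real (i+1) / real m"])
     (auto intro: continuous_on_subset[OF assms] simp: cell_ivl_def)

lemma set_integral_indicator_Int:
  fixes f :: "real \<Rightarrow> real"
  shows "(LBINT t:A. indicator B t * f t) = (LBINT t:A \<inter> B. f t)"
  unfolding set_lebesgue_integral_def
  by (rule Bochner_Integration.integral_cong) (auto split: split_indicator)

lemma set_integrable_indicator_Int:
  fixes f :: "real \<Rightarrow> real"
  assumes "set_integrable lborel (A \<inter> B) f"
  shows "set_integrable lborel A (\<lambda>t. indicator B t * f t)"
  using assms unfolding set_integrable_def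
  by (rule Bochner_Integration.integrable_cong[THEN iffD1, rotated 2]) (auto split: split_indicator)

lemma set_integral_sum:
  fixes f :: "nat \<Rightarrow> real \<Rightarrow> real"
  assumes "\<And>i. i \<in> I \<Longrightarrow> set_integrable lborel A (f i)"
  shows "(LBINT t:A. (\<Sum>i\<in>I. f i t)) = (\<Sum>i\<in>I. LBINT t:A. f i t)"
  using assms unfolding set_lebesgue_integral_def set_integrable_def
  by (simp add: sum_distrib_left Bochner_Integration.integral_sum)

lemma set_integral_step_eq_sum:
  fixes f :: "real \<Rightarrow> real" and \<gamma> :: "nat \<Rightarrow> real"
  assumes m: "m \<ge> 1" and f: "set_integrable lborel {0..1} f"
  shows "(LBINT t:{0..1}. f t * \<gamma> (cell_index m t)) = (\<Sum>i<m. \<gamma> i * (LBINT t:cell_ivl m i. f t))"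
proof -
  have "(LBINT t:{0..1}. f t * \<gamma> (cell_index m t))
      = (\<Sum>j<m. LBINT t:{0..1}. \<gamma> j * (indicator {t. cell_index m t = j} t * f t))"
    unfolding step_eq_sum_indicator[OF m]
    by (rule set_integral_sum)
      (auto intro!: set_integrable_mult_right set_integrable_indicator_Int set_integrable_subset[OF f])
  also have "\<dots> = (\<Sum>i<m. \<gamma> i * (LBINT t:cell_ivl m i. f t))"
  proof (rule sum.cong[OF refl])
    fix j assume j: "j \<in> {..<m}"
    have "{0..1} \<inter> {t. cell_index m t = j} - cell_ivl m j \<subseteq> {1}"
    proof
      fix t assume "t \<in> {0..1} \<inter> {t. cell_index m t = j} - cell_ivl m j"
      then show "t \<in> {1}" using cell_index_eq_iff[OF m, of t j] m by (auto simp: cell_ivl_def)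
    qed
    moreover have "cell_ivl m j \<subseteq> {0..1} \<inter> {t. cell_index m t = j}"
      using j cell_index_cell_ivl cell_ivl_subset_01 by blast
    ultimately have "(LBINT t:{0..1} \<inter> {t. cell_index m t = j}. f t) = (LBINT t:cell_ivl m j. f t)"
      by (intro set_integral_discrete_difference[where X="{1}"]) auto
    then show "(LBINT t:{0..1}. \<gamma> j * (indicator {t. cell_index m t = j} t * f t))
        = \<gamma> j * (LBINT t:cell_ivl m j. f t)"
      by (simp add: set_integral_indicator_Int)
  qed
  finally show ?thesis .
qed

section \<open>Convolution with a step function\<close>

text \<open>For a primitive G of g, cell_conv G m j r is the integral of g(r - t) over t \<in> [0, r] \<inter> \<Delta>_j.\<close>
definition cell_conv :: "(real \<Rightarrow> real) \<Rightarrow> nat \<Rightarrow> nat \<Rightarrow> real \<Rightarrow> real" where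
  "cell_conv G m j r = (G (max (r - real j / real m) 0) - G 0) - (G (max (r - real (j+1) / real m) 0) - G 0)"

lemma continuous_cell_conv:
  assumes "continuous_on UNIV G"
  shows "continuous_on UNIV (cell_conv G m j)"
  unfolding cell_conv_def
  by (intro continuous_intros continuous_on_compose2[OF assms]) auto

lemma conv_domain_memD:
  assumes m: "m \<ge> 1" and r: "0 \<le> r" "r \<le> 1" and t: "t \<in> {0..r} \<inter> {t. cell_index m t = j}"
  shows "real j / real m \<le> t" "t \<le> real (j+1) / real m" "t \<le> r"
proof -
  have c: "j < m \<and> real j / real m \<le> t \<and> (t < real (j+1) / real m \<or> j = m - 1)"
    using cell_index_eq_iff[OF m, of t j] t r by auto
  have "j = m - 1 \<Longrightarrow> real (j+1) / real m = 1" using m by auto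
  then show "real j / real m \<le> t" "t \<le> real (j+1) / real m" "t \<le> r" using c t r by auto
qed

lemma set_integral_conv_cell:
  fixes g G :: "real \<Rightarrow> real"
  assumes m: "m \<ge> 1" and G: "\<And>x. (G has_real_derivative g x) (at x)" and gc: "continuous_on UNIV g"
    and r: "0 \<le> r" "r \<le> 1" and j: "j < m"
  shows "(LBINT t:{0..r} \<inter> {t. cell_index m t = j}. g (r - t)) = cell_conv G m j r"
proof (cases "r < real j / real m")
  case True
  have "t \<notin> {0..r} \<inter> {t. cell_index m t = j}" for t
    using conv_domain_memD(1,3)[OF m r, of t j] True by linarith
  then have "{0..r} \<inter> {t. cell_index m t = j} = {}" by blast
  moreover have "r - real (j+1) / real m < 0" using True m
    by (simp add: divide_simps)
  ultimately show ?thesis using True by (simp add: set_lebesgue_integral_def cell_conv_def)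
next
  case False
  define e where "e = min r (real (j+1) / real m)"
  have je: "real j / real m \<le> e" using False m by (auto simp: e_def divide_simps)
  have "t \<in> {real j / real m..e}" if "t \<in> {0..r} \<inter> {t. cell_index m t = j}" for t
    using conv_domain_memD[OF m r that] by (simp add: e_def)
  moreover have "t \<in> {0..r} \<inter> {t. cell_index m t = j}" if t: "t \<in> {real j / real m..e}" "t \<noteq> e" for t
  proof -
    have "t < r" "t < real (j+1) / real m" using t by (auto simp: e_def)
    moreover have "0 \<le> t" using t(1) order_trans[of 0 "real j / real m" t] by simp
    ultimately show ?thesis using cell_index_eq_iff[OF m, of t j] r j t by auto
  qed
  ultimately have "(LBINT t:{0..r} \<inter> {t. cell_index m t = j}. g (r - t)) = (LBINT t:{real j / real m..e}. g (r - t))"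
    by (intro set_integral_discrete_difference[where X="{e}"]) (blast | simp)+
  also have "\<dots> = (\<lambda>t. - G (r - t)) e - (\<lambda>t. - G (r - t)) (real j / real m)"
    by (rule set_integral_FTC_Icc[OF _ _ je])
      (auto intro!: derivative_eq_intros G[THEN DERIV_chain2] continuous_on_compose2[OF gc] continuous_intros)
  also have "r - e = max (r - real (j+1) / real m) 0" by (auto simp: e_def)
  moreover have "max (r - real j / real m) 0 = r - real j / real m" using False by auto
  ultimately show ?thesis by (simp add: cell_conv_def)
qed

lemma set_integral_conv_step:
  fixes g G :: "real \<Rightarrow> real" and \<beta> :: "nat \<Rightarrow> real"
  assumes m: "m \<ge> 1" and G: "\<And>x. (G has_real_derivative g x) (at x)" and gc: "continuous_on UNIV g"
    and r: "0 \<le> r" "r \<le> 1"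
  shows "(LBINT t:{0..r}. g (r - t) * \<beta> (cell_index m t)) = (\<Sum>j<m. \<beta> j * cell_conv G m j r)"
proof -
  have gc': "continuous_on {0..r} (\<lambda>t. g (r - t))"
    by (intro continuous_on_compose2[OF gc] continuous_intros) auto
  have "(LBINT t:{0..r}. g (r - t) * \<beta> (cell_index m t))
      = (\<Sum>j<m. LBINT t:{0..r}. \<beta> j * (indicator {t. cell_index m t = j} t * g (r - t)))"
    unfolding step_eq_sum_indicator[OF m]
    by (rule set_integral_sum)
      (auto intro!: set_integrable_mult_right set_integrable_indicator_Int set_integrable_continuous_subset[OF gc'])
  also have "\<dots> = (\<Sum>j<m. \<beta> j * cell_conv G m j r)"
    by (intro sum.cong refl)
      (simp add: set_integral_indicator_Int set_integral_conv_cell[OF m G gc r])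
  finally show ?thesis .
qed

section \<open>Square-integrable functions and the weighted inner product\<close>

lemma set_borel_measurable_mult:
  fixes f v :: "real \<Rightarrow> real"
  assumes "f \<in> borel_measurable borel" "set_borel_measurable lborel A v"
  shows "set_borel_measurable lborel A (\<lambda>t. f t * v t)"
proof -
  have "(\<lambda>t. f t * (indicator A t *\<^sub>R v t)) \<in> borel_measurable lborel"
    using assms unfolding set_borel_measurable_def by (simp add: measurable_lborel1)
  then show ?thesis unfolding set_borel_measurable_def by (simp add: algebra_simps)
qed

lemma set_borel_measurable_mult2:
  fixes u v :: "real \<Rightarrow> real"
  assumes "set_borel_measurable lborel A u" "set_borel_measurable lborel A v"
  shows "set_borel_measurable lborel A (\<lambda>t. u t * v t)"
proof -
  have "(\<lambda>t. (indicator A t *\<^sub>R u t) * (indicator A t *\<^sub>R v t)) \<in> borel_measurable lborel"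
    using assms unfolding set_borel_measurable_def by simp
  moreover have "(\<lambda>t. (indicator A t *\<^sub>R u t) * (indicator A t *\<^sub>R v t)) = (\<lambda>t. indicator A t *\<^sub>R (u t * v t))"
    by (auto simp: fun_eq_iff split: split_indicator)
  ultimately show ?thesis unfolding set_borel_measurable_def by simp
qed

lemma set_borel_measurable_add:
  fixes u w :: "real \<Rightarrow> real"
  assumes "set_borel_measurable lborel A u" "set_borel_measurable lborel A w"
  shows "set_borel_measurable lborel A (\<lambda>t. u t + w t)"
proof -
  have "(\<lambda>t. (indicator A t *\<^sub>R u t) + (indicator A t *\<^sub>R w t)) \<in> borel_measurable lborel"
    using assms unfolding set_borel_measurable_def by (rule borel_measurable_add)
  moreover have "(\<lambda>t. (indicator A t *\<^sub>R u t) + (indicator A t *\<^sub>R w t)) = (\<lambda>t. indicator A t *\<^sub>R (u t + w t))"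
    by (auto simp: fun_eq_iff split: split_indicator)
  ultimately show ?thesis unfolding set_borel_measurable_def by simp
qed

lemma set_integrable_bounded_mult_L2:
  fixes f v :: "real \<Rightarrow> real"
  assumes v: "L2 v" and f: "f \<in> borel_measurable borel" and K: "\<And>t. t \<in> {0..1} \<Longrightarrow> \<bar>f t\<bar> \<le> K"
  shows "set_integrable lborel {0..1} (\<lambda>t. f t * v t)"
proof (rule set_integrable_bound[where f="\<lambda>t. K * (1 + (v t)^2)"])
  show "set_integrable lborel {0..1} (\<lambda>t. K * (1 + (v t)^2))"
    using v borel_integrable_atLeastAtMost'[of 0 1 "\<lambda>t. K"]
    by (auto simp: L2_def algebra_simps intro!: set_integral_add)
  show "set_borel_measurable lborel {0..1} (\<lambda>t. f t * v t)"
    using v f by (simp add: L2_def set_borel_measurable_mult)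
  show "AE t in lborel. t \<in> {0..1} \<longrightarrow> norm (f t * v t) \<le> norm (K * (1 + (v t)^2))"
  proof (intro AE_I2 impI)
    fix t :: real assume t: "t \<in> {0..1}"
    have K0: "0 \<le> K" using K[OF t] by linarith
    have "2 * \<bar>v t\<bar> * 1 \<le> \<bar>v t\<bar>^2 + 1^2" by (rule sum_squares_bound)
    then have "\<bar>v t\<bar> \<le> 1 + (v t)^2" by simp
    then have "\<bar>f t * v t\<bar> \<le> K * (1 + (v t)^2)"
      using K[OF t] K0 by (simp add: abs_mult mult_mono)
    then show "norm (f t * v t) \<le> norm (K * (1 + (v t)^2))" using K0 by simp
  qed
qed

lemma set_integrable_bounded_mult_L2_L2:
  fixes f u v :: "real \<Rightarrow> real"
  assumes u: "L2 u" and v: "L2 v" and f: "f \<in> borel_measurable borel" and K: "\<And>t. t \<in> {0..1} \<Longrightarrow> \<bar>f t\<bar> \<le> K"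
  shows "set_integrable lborel {0..1} (\<lambda>t. f t * u t * v t)"
proof (rule set_integrable_bound[where f="\<lambda>t. K * ((u t)^2 + (v t)^2)"])
  show "set_integrable lborel {0..1} (\<lambda>t. K * ((u t)^2 + (v t)^2))"
    using u v by (auto simp: L2_def algebra_simps intro!: set_integral_add)
  show "set_borel_measurable lborel {0..1} (\<lambda>t. f t * u t * v t)"
    using set_borel_measurable_mult[OF f set_borel_measurable_mult2, of "{0..1}" u v] u v
    by (simp add: L2_def mult.assoc)
  show "AE t in lborel. t \<in> {0..1} \<longrightarrow> norm (f t * u t * v t) \<le> norm (K * ((u t)^2 + (v t)^2))"
  proof (intro AE_I2 impI)
    fix t :: real assume t: "t \<in> {0..1}"
    have K0: "0 \<le> K" using K[of t] t by linarith
    have "2 * \<bar>u t\<bar> * \<bar>v t\<bar> \<le> \<bar>u t\<bar>^2 + \<bar>v t\<bar>^2" by (rule sum_squares_bound)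
    moreover have "0 \<le> \<bar>u t\<bar> * \<bar>v t\<bar>" by simp
    ultimately have "\<bar>u t * v t\<bar> \<le> (u t)^2 + (v t)^2" unfolding abs_mult power2_abs by linarith
    then have "\<bar>f t * u t * v t\<bar> \<le> K * ((u t)^2 + (v t)^2)"
      using K[OF t] K0 by (simp add: abs_mult mult_mono mult.assoc)
    then show "norm (f t * u t * v t) \<le> norm (K * ((u t)^2 + (v t)^2))" using K0 by simp
  qed
qed

lemma continuous_bounded_01:
  fixes w :: "real \<Rightarrow> real"
  assumes "continuous_on UNIV w"
  obtains K where "\<And>t. t \<in> {0..1} \<Longrightarrow> \<bar>w t\<bar> \<le> K"
proof -
  have "compact (w ` {0..1})"
    by (rule compact_continuous_image[OF continuous_on_subset[OF assms]]) auto
  then obtain K where "\<forall>x\<in>w ` {0..1}. norm x \<le> K" using compact_imp_bounded bounded_iff by metis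
  then show ?thesis using that[of K] by auto
qed

lemma set_integrable_continuous_mult_L2:
  fixes w v :: "real \<Rightarrow> real"
  assumes v: "L2 v" and w: "continuous_on UNIV w"
  shows "set_integrable lborel {0..1} (\<lambda>t. w t * v t)"
proof -
  obtain K where "\<And>t. t \<in> {0..1} \<Longrightarrow> \<bar>w t\<bar> \<le> K" using continuous_bounded_01[OF w] by blast
  then show ?thesis by (rule set_integrable_bounded_mult_L2[OF v borel_measurable_continuous_onI[OF w]])
qed

lemma set_integrable_continuous_mult_L2_L2:
  fixes w u v :: "real \<Rightarrow> real"
  assumes u: "L2 u" and v: "L2 v" and w: "continuous_on UNIV w"
  shows "set_integrable lborel {0..1} (\<lambda>t. w t * u t * v t)"
proof -
  obtain K where "\<And>t. t \<in> {0..1} \<Longrightarrow> \<bar>w t\<bar> \<le> K" using continuous_bounded_01[OF w] by blast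
  then show ?thesis by (rule set_integrable_bounded_mult_L2_L2[OF u v borel_measurable_continuous_onI[OF w]])
qed

lemma set_integrable_cell_ivl_mult_L2:
  fixes w v :: "real \<Rightarrow> real"
  assumes v: "L2 v" and w: "continuous_on UNIV w" and i: "i < m"
  shows "set_integrable lborel (cell_ivl m i) (\<lambda>t. w t * v t)"
  by (rule set_integrable_subset[OF set_integrable_continuous_mult_L2[OF v w]]) (use cell_ivl_subset_01[OF i] in auto)

lemma bounded_imp_L2:
  fixes f :: "real \<Rightarrow> real"
  assumes f: "f \<in> borel_measurable borel" and K: "\<And>t. t \<in> {0..1} \<Longrightarrow> \<bar>f t\<bar> \<le> K"
  shows "L2 f"
proof -
  have sb: "set_borel_measurable lborel {0..1} f"
    unfolding set_borel_measurable_def using f by (simp add: measurable_lborel1)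
  have "set_integrable lborel {0..1} (\<lambda>t. (f t)^2)"
  proof (rule set_integrable_bound[where f="\<lambda>t::real. K^2"])
    show "set_integrable lborel {0..1} (\<lambda>t::real. K^2)" by (rule borel_integrable_atLeastAtMost') simp
    show "set_borel_measurable lborel {0..1} (\<lambda>t. (f t)^2)"
      using set_borel_measurable_mult[OF f sb] by (simp add: power2_eq_square)
    show "AE t in lborel. t \<in> {0..1} \<longrightarrow> norm ((f t)^2) \<le> norm (K^2)"
    proof (intro AE_I2 impI)
      fix t :: real assume "t \<in> {0..1}"
      then have "\<bar>f t\<bar>^2 \<le> K^2" by (intro power_mono K) simp_all
      then show "norm ((f t)^2) \<le> norm (K^2)" by simp
    qed
  qed
  then show ?thesis using sb by (simp add: L2_def)
qed

lemma step_L2: "m \<ge> 1 \<Longrightarrow> L2 (\<lambda>t. (\<gamma>::nat \<Rightarrow> real) (cell_index m t))"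
  by (rule bounded_imp_L2[OF borel_measurable_step abs_step_le_sum])

lemma L2_lincomb:
  assumes u: "L2 u" and w: "L2 w"
  shows "L2 (\<lambda>t. p * u t + q * w t)"
proof -
  have "set_integrable lborel {0..1} (\<lambda>t. p^2 * (u t)^2 + q^2 * (w t)^2 + (2 * p * q) * u t * w t)"
    using u w set_integrable_continuous_mult_L2_L2[OF u w, of "\<lambda>_. 2 * p * q"]
    by (auto simp: L2_def intro!: set_integral_add)
  moreover have "(p * x + q * y)^2 = p^2 * x^2 + q^2 * y^2 + (2 * p * q) * x * y" for x y :: real
    by (simp add: power2_eq_square algebra_simps)
  moreover have "set_borel_measurable lborel {0..1} (\<lambda>t. p * u t + q * w t)"
    using u w by (auto simp: L2_def intro!: set_borel_measurable_add set_borel_measurable_mult)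
  ultimately show ?thesis by (simp add: L2_def)
qed

lemma inner_sigma_integrable:
  "L2 u \<Longrightarrow> L2 v \<Longrightarrow> set_integrable lborel {0..1} (\<lambda>t. exp (- 2 * \<sigma> * t) * u t * v t)"
  by (rule set_integrable_continuous_mult_L2_L2) (auto intro!: continuous_intros)

lemma inner_sigma_lincomb:
  assumes "L2 x" "L2 y" "L2 z"
  shows "inner_sigma \<sigma> (\<lambda>s. p * x s + q * y s) z = p * inner_sigma \<sigma> x z + q * inner_sigma \<sigma> y z"
proof -
  have "inner_sigma \<sigma> (\<lambda>s. p * x s + q * y s) z
      = (LBINT t:{0..1}. p * (exp (- 2 * \<sigma> * t) * x t * z t) + q * (exp (- 2 * \<sigma> * t) * y t * z t))"
    unfolding inner_sigma_def by (rule set_lebesgue_integral_cong) (auto simp: algebra_simps)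
  also have "\<dots> = p * inner_sigma \<sigma> x z + q * inner_sigma \<sigma> y z"
    unfolding inner_sigma_def
    by (subst set_integral_add(2)) (use assms inner_sigma_integrable in auto)
  finally show ?thesis .
qed

lemma inner_sigma_self_nonneg: "inner_sigma \<sigma> v v \<ge> 0"
  unfolding inner_sigma_def set_lebesgue_integral_def
  by (rule Bochner_Integration.integral_nonneg) (simp add: indicator_def mult.assoc)

lemma inner_sigma_cong_ae:
  assumes "L2 f" "L2 g" "L2 u" "ae_eq01 f g"
  shows "inner_sigma \<sigma> f u = inner_sigma \<sigma> g u"
  unfolding inner_sigma_def set_lebesgue_integral_def
proof (rule integral_cong_AE)
  show "AE t in lborel. indicator {0..1} t *\<^sub>R (exp (- 2 * \<sigma> * t) * f t * u t)
      = indicator {0..1} t *\<^sub>R (exp (- 2 * \<sigma> * t) * g t * u t)"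
    using assms(4) unfolding ae_eq01_def by (auto elim!: eventually_mono split: split_indicator)
qed (use assms inner_sigma_integrable in \<open>auto simp: set_integrable_def\<close>)

lemma inner_sigma_young:
  assumes u: "L2 u" and v: "L2 v" and c: "c > 0"
  shows "inner_sigma \<sigma> v u \<le> c / 4 * inner_sigma \<sigma> u u + 1 / c * inner_sigma \<sigma> v v"
proof -
  have "inner_sigma \<sigma> v u \<le> (LBINT t:{0..1}. c / 4 * (exp (- 2 * \<sigma> * t) * u t * u t)
      + 1 / c * (exp (- 2 * \<sigma> * t) * v t * v t))"
    unfolding inner_sigma_def
  proof (rule set_integral_mono)
    fix t :: real
    have "0 \<le> (c * u t / 2 - v t)^2" by simp
    then have "v t * u t \<le> c / 4 * (u t * u t) + 1 / c * (v t * v t)"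
      using c by (simp add: power2_eq_square field_simps)
    then have "exp (- 2 * \<sigma> * t) * (v t * u t)
        \<le> exp (- 2 * \<sigma> * t) * (c / 4 * (u t * u t) + 1 / c * (v t * v t))"
      by (rule mult_left_mono) simp
    then show "exp (- 2 * \<sigma> * t) * v t * u t
        \<le> c / 4 * (exp (- 2 * \<sigma> * t) * u t * u t) + 1 / c * (exp (- 2 * \<sigma> * t) * v t * v t)"
      by (simp add: algebra_simps)
  qed (use u v inner_sigma_integrable in auto)
  also have "\<dots> = c / 4 * inner_sigma \<sigma> u u + 1 / c * inner_sigma \<sigma> v v"
    unfolding inner_sigma_def by (subst set_integral_add(2)) (use u v inner_sigma_integrable in auto)
  finally show ?thesis .
qed

lemma inner_sigma_sum_diff:
  assumes "L2 u" "L2 w"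
  shows "inner_sigma \<sigma> (\<lambda>s. u s + w s) (\<lambda>s. u s - w s) = inner_sigma \<sigma> u u - inner_sigma \<sigma> w w"
proof -
  have "inner_sigma \<sigma> (\<lambda>s. u s + w s) (\<lambda>s. u s - w s)
      = (LBINT t:{0..1}. exp (- 2 * \<sigma> * t) * u t * u t - exp (- 2 * \<sigma> * t) * w t * w t)"
    unfolding inner_sigma_def by (rule set_lebesgue_integral_cong) (auto simp: algebra_simps)
  then show ?thesis
    unfolding inner_sigma_def
    using set_integral_diff(2)[OF inner_sigma_integrable[OF assms(1,1)] inner_sigma_integrable[OF assms(2,2)]]
    by simp
qed

lemma ae_eq01_zero_if_inner_sigma_self_eq_0:
  assumes u: "L2 u" and 0: "inner_sigma \<sigma> u u = 0"
  shows "ae_eq01 u (\<lambda>_. 0)"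
proof -
  have "AE t in lborel. indicator {0..1} t *\<^sub>R (exp (- 2 * \<sigma> * t) * u t * u t) = 0"
    using 0 inner_sigma_integrable[OF u u]
    unfolding inner_sigma_def set_lebesgue_integral_def set_integrable_def
    by (subst integral_nonneg_eq_0_iff_AE[symmetric]) (auto simp: indicator_def mult.assoc)
  then show ?thesis unfolding ae_eq01_def
    by (elim eventually_mono) (auto simp: indicator_def)
qed

lemma lower_triangular_solvable:
  fixes M :: "nat \<Rightarrow> nat \<Rightarrow> real"
  assumes up: "\<And>i j. i < j \<Longrightarrow> M i j = 0" and dg: "\<And>i. i < n \<Longrightarrow> M i i \<noteq> 0"
  shows "\<exists>y. \<forall>i<n. (\<Sum>j<n. M i j * y j) = r i"
proof -
  have "k \<le> n \<Longrightarrow> \<exists>y. \<forall>i<k. (\<Sum>j<n. M i j * y j) = r i" for k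
  proof (induction k)
    case 0 then show ?case by simp
  next
    case (Suc k)
    then obtain y where y: "\<forall>i<k. (\<Sum>j<n. M i j * y j) = r i" by auto
    have kn: "k < n" using Suc.prems by simp
    define y' where "y' = y(k := (r k - (\<Sum>j<k. M k j * y j)) / M k k)"
    have "(\<Sum>j<n. M i j * y' j) = r i" if i: "i < Suc k" for i
    proof -
      have red: "(\<Sum>j<n. M i j * y' j) = (\<Sum>j<Suc i. M i j * y' j)"
        by (rule sum.mono_neutral_right) (use i kn up in auto)
      show ?thesis
      proof (cases "i = k")
        case True
        then show ?thesis using red dg[OF kn] by (simp add: y'_def)
      next
        case False
        then have ik: "i < k" using i by simp
        have "(\<Sum>j<Suc i. M i j * y' j) = (\<Sum>j<Suc i. M i j * y j)"
          by (rule sum.cong) (use ik in \<open>auto simp: y'_def\<close>)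
        also have "\<dots> = (\<Sum>j<n. M i j * y j)"
          by (rule sum.mono_neutral_left) (use ik kn up in auto)
        finally show ?thesis using red y ik by simp
      qed
    qed
    then show ?case by blast
  qed
  then show ?thesis by blast
qed

lemma schur_test:
  fixes K :: "nat \<Rightarrow> nat \<Rightarrow> real" and x :: "nat \<Rightarrow> real"
  assumes nonneg: "\<And>i j. K i j \<ge> 0"
    and rows: "\<And>i. i < n \<Longrightarrow> (\<Sum>j<n. K i j) \<le> R" and cols: "\<And>j. j < n \<Longrightarrow> (\<Sum>i<n. K i j) \<le> R"
  shows "(\<Sum>i<n. \<Sum>j<n. K i j * (x i * x j)) \<le> R * (\<Sum>i<n. (x i)^2)"
proof -
  have "(\<Sum>i<n. \<Sum>j<n. K i j * (x i * x j)) \<le> (\<Sum>i<n. \<Sum>j<n. K i j * ((x i)^2 / 2 + (x j)^2 / 2))"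
  proof (intro sum_mono mult_left_mono nonneg)
    fix i j
    have "0 \<le> (x i - x j)^2" by simp
    then show "x i * x j \<le> (x i)^2 / 2 + (x j)^2 / 2" by (simp add: power2_diff)
  qed
  also have "\<dots> = (\<Sum>i<n. \<Sum>j<n. K i j * ((x i)^2 / 2)) + (\<Sum>j<n. \<Sum>i<n. K i j * ((x j)^2 / 2))"
    by (simp only: distrib_left sum.distrib sum.swap[of "\<lambda>i j. K i j * ((x j)^2 / 2)"])
  also have "\<dots> = (\<Sum>i<n. (x i)^2 / 2 * (\<Sum>j<n. K i j)) + (\<Sum>j<n. (x j)^2 / 2 * (\<Sum>i<n. K i j))"
    by (intro arg_cong2[where f="(+)"] sum.cong refl) (simp_all add: sum_distrib_left sum_distrib_right mult.commute)
  also have "\<dots> \<le> (\<Sum>i<n. (x i)^2 / 2 * R) + (\<Sum>j<n. (x j)^2 / 2 * R)"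
    by (intro add_mono sum_mono mult_left_mono rows cols) auto
  also have "\<dots> = R * (\<Sum>i<n. (x i)^2)"
    by (simp add: sum_distrib_left sum_distrib_right algebra_simps)
  finally show ?thesis .
qed

lemma square_set_integral_le:
  fixes f :: "real \<Rightarrow> real"
  assumes A: "A \<in> sets borel" "emeasure lborel A < \<infinity>" "measure lborel A > 0"
    and f: "set_integrable lborel A f" and f2: "set_integrable lborel A (\<lambda>t. (f t)^2)"
  shows "(LBINT t:A. f t)^2 \<le> measure lborel A * (LBINT t:A. (f t)^2)"
proof -
  define \<mu> where "\<mu> = measure lborel A"
  define c where "c = (LBINT t:A. f t) / \<mu>"
  have ic: "set_integrable lborel A (\<lambda>_. c^2)"
    using A unfolding set_integrable_def by (intro integrable_scaleR_left integrable_indicator) auto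
  have "0 \<le> (LBINT t:A. (f t - c)^2)"
    unfolding set_lebesgue_integral_def
    by (rule Bochner_Integration.integral_nonneg) (auto simp: indicator_def)
  also have "(LBINT t:A. (f t - c)^2) = (LBINT t:A. ((f t)^2 - 2 * c * f t) + c^2)"
    by (rule set_lebesgue_integral_cong) (use A in \<open>auto simp: power2_diff algebra_simps\<close>)
  also have "\<dots> = (LBINT t:A. (f t)^2) - 2 * c * (LBINT t:A. f t) + \<mu> * c^2"
    using f f2 ic A by (simp add: set_integral_add set_integral_diff set_integral_const \<mu>_def)
  also have "\<dots> = (LBINT t:A. (f t)^2) - (LBINT t:A. f t)^2 / \<mu>"
    using A by (simp add: c_def \<mu>_def power2_eq_square field_simps)
  finally show ?thesis using A unfolding \<mu>_def by (simp add: field_simps)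
qed

lemma exp_minus_1_le_twice: "0 \<le> x \<Longrightarrow> x \<le> 1 \<Longrightarrow> exp x - 1 \<le> 2 * (x::real)"
  using exp_bound[of x] mult_left_mono[of x 1 x] by (simp add: power2_eq_square)

section \<open>The discretised operators as matrices\<close>

locale discretization =
  fixes x0 :: "real \<Rightarrow> real" and \<sigma> :: real and m :: nat
  assumes continuous_x0: "continuous_on {0..1} x0"
    and x0_pos: "\<And>t. t \<in> {0..1} \<Longrightarrow> x0 t > 0"
    and sigma_pos: "\<sigma> > 0" and sigma_le_m: "\<sigma> \<le> real m"
begin

lemma m_ge_1: "m \<ge> 1"
  using sigma_pos sigma_le_m by (cases m) auto

lemma m_pos: "real m > 0"
  using m_ge_1 by simp

definition x0_ext :: "real \<Rightarrow> real" where
  "x0_ext u = x0 (max 0 (min 1 u))"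

definition x0_damped :: "real \<Rightarrow> real" where
  "x0_damped u = x0_ext u * exp (- \<sigma> * u)"

lemma continuous_x0_ext: "continuous_on UNIV x0_ext"
  unfolding x0_ext_def
  by (rule continuous_on_compose2[OF continuous_x0]) (auto intro!: continuous_intros)

lemma continuous_x0_damped: "continuous_on UNIV x0_damped"
  unfolding x0_damped_def by (intro continuous_intros continuous_x0_ext)

lemma x0_ext_pos: "x0_ext u > 0"
  unfolding x0_ext_def by (rule x0_pos) auto

lemma x0_ext_eq: "t \<in> {0..1} \<Longrightarrow> x0_ext t = x0 t"
  unfolding x0_ext_def by auto

definition prim_x0 :: "real \<Rightarrow> real" where
  "prim_x0 = (SOME G. \<forall>x. (G has_real_derivative x0_ext x) (at x))"

definition prim_damped :: "real \<Rightarrow> real" where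
  "prim_damped = (SOME G. \<forall>x. (G has_real_derivative x0_damped x) (at x))"

lemma prim_x0_deriv: "(prim_x0 has_real_derivative x0_ext x) (at x)"
  using someI_ex[OF continuous_on_UNIV_has_antiderivative[OF continuous_x0_ext]]
  unfolding prim_x0_def by blast

lemma prim_damped_deriv: "(prim_damped has_real_derivative x0_damped x) (at x)"
  using someI_ex[OF continuous_on_UNIV_has_antiderivative[OF continuous_x0_damped]]
  unfolding prim_damped_def by blast

lemma continuous_prim_x0: "continuous_on UNIV prim_x0"
  using prim_x0_deriv by (meson DERIV_isCont continuous_at_imp_continuous_on)

lemma continuous_prim_damped: "continuous_on UNIV prim_damped"
  using prim_damped_deriv by (meson DERIV_isCont continuous_at_imp_continuous_on)

definition cint :: "(real \<Rightarrow> real) \<Rightarrow> nat \<Rightarrow> real" where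
  "cint u j = (LBINT t:cell_ivl m j. u t)"

definition cint_exp :: "(real \<Rightarrow> real) \<Rightarrow> nat \<Rightarrow> real" where
  "cint_exp u j = (LBINT t:cell_ivl m j. exp (- \<sigma> * t) * u t)"

definition conv_weight :: "nat \<Rightarrow> nat \<Rightarrow> real" where
  "conv_weight i j = (LBINT r:cell_ivl m i. cell_conv prim_x0 m j r)"

definition conv_weight_exp :: "nat \<Rightarrow> nat \<Rightarrow> real" where
  "conv_weight_exp i j = (LBINT r:cell_ivl m i. cell_conv prim_damped m j r)"

lemma Qm_eq_step: "Qm m u t = real m * cint u (cell_index m t)"
  by (simp add: Qm_def cint_def cell_eq_cell_ivl)

lemma Qms_eq_step: "Qms \<sigma> m u t = exp (\<sigma> * t) * real m * cint_exp u (cell_index m t)"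
  by (simp add: Qms_def cint_exp_def cell_eq_cell_ivl)

lemma Fderiv_Qm_eq_sum:
  assumes r: "0 \<le> r" "r \<le> 1"
  shows "Fderiv x0 (Qm m u) r = 2 * (\<Sum>j<m. (real m * cint u j) * cell_conv prim_x0 m j r)"
proof -
  have "(LBINT t:{0..r}. x0 (r - t) * Qm m u t)
      = (LBINT t:{0..r}. x0_ext (r - t) * (real m * cint u (cell_index m t)))"
    by (rule set_lebesgue_integral_cong) (use r in \<open>auto simp: x0_ext_eq Qm_eq_step\<close>)
  also have "\<dots> = (\<Sum>j<m. (real m * cint u j) * cell_conv prim_x0 m j r)"
    by (rule set_integral_conv_step[OF m_ge_1 prim_x0_deriv continuous_x0_ext r])
  finally show ?thesis by (simp add: Fderiv_def)
qed

text \<open>The weight exp(\<sigma>t) of Q^\<sigma>_m splits as exp(\<sigma>r) exp(-\<sigma>(r - t)), moving the damping into the kernel.\<close>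
lemma Fderiv_Qms_eq_sum:
  assumes r: "0 \<le> r" "r \<le> 1"
  shows "Fderiv x0 (Qms \<sigma> m u) r = 2 * exp (\<sigma> * r) * (\<Sum>j<m. (real m * cint_exp u j) * cell_conv prim_damped m j r)"
proof -
  have "(LBINT t:{0..r}. x0 (r - t) * Qms \<sigma> m u t)
      = (LBINT t:{0..r}. exp (\<sigma> * r) * (x0_damped (r - t) * (real m * cint_exp u (cell_index m t))))"
  proof (rule set_lebesgue_integral_cong)
    show "\<forall>t. t \<in> {0..r} \<longrightarrow> x0 (r - t) * Qms \<sigma> m u t
        = exp (\<sigma> * r) * (x0_damped (r - t) * (real m * cint_exp u (cell_index m t)))"
    proof (intro allI impI)
      fix t assume t: "t \<in> {0..r}"
      have "exp (\<sigma> * r) * exp (- \<sigma> * (r - t)) = exp (\<sigma> * t)"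
        by (simp add: exp_add[symmetric] algebra_simps)
      then show "x0 (r - t) * Qms \<sigma> m u t
          = exp (\<sigma> * r) * (x0_damped (r - t) * (real m * cint_exp u (cell_index m t)))"
        using t r by (simp add: x0_damped_def x0_ext_eq Qms_eq_step)
    qed
  qed simp
  also have "\<dots> = exp (\<sigma> * r) * (\<Sum>j<m. (real m * cint_exp u j) * cell_conv prim_damped m j r)"
    using set_integral_conv_step[OF m_ge_1 prim_damped_deriv continuous_x0_damped r] by simp
  finally show ?thesis by (simp add: Fderiv_def)
qed

abbreviation QFQ :: "(real \<Rightarrow> real) \<Rightarrow> real \<Rightarrow> real" where
  "QFQ u \<equiv> Qm m (Fderiv x0 (Qm m u))"

abbreviation QFQs :: "(real \<Rightarrow> real) \<Rightarrow> real \<Rightarrow> real" where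
  "QFQs u \<equiv> Qms \<sigma> m (Fderiv x0 (Qms \<sigma> m u))"

lemma QFQ_eq_sum: "QFQ u s = 2 * real m ^ 2 * (\<Sum>j<m. cint u j * conv_weight (cell_index m s) j)"
proof -
  let ?i = "cell_index m s"
  have i: "?i < m" using cell_index_less[OF m_ge_1] .
  have "(LBINT r:cell_ivl m ?i. Fderiv x0 (Qm m u) r)
      = (LBINT r:cell_ivl m ?i. 2 * (\<Sum>j<m. (real m * cint u j) * cell_conv prim_x0 m j r))"
    by (rule set_lebesgue_integral_cong) (use cell_ivl_subset[OF i] in \<open>auto simp: Fderiv_Qm_eq_sum\<close>)
  also have "\<dots> = 2 * (\<Sum>j<m. (real m * cint u j) * conv_weight ?i j)"
    by (simp add: set_integral_sum set_integrable_cell_ivl_continuous[OF continuous_cell_conv[OF continuous_prim_x0]]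
        conv_weight_def)
  finally show ?thesis
    by (simp add: Qm_def cell_eq_cell_ivl power2_eq_square sum_distrib_left algebra_simps)
qed

lemma QFQs_eq_sum:
  "QFQs u s = exp (\<sigma> * s) * (2 * real m ^ 2 * (\<Sum>j<m. cint_exp u j * conv_weight_exp (cell_index m s) j))"
proof -
  let ?i = "cell_index m s"
  have i: "?i < m" using cell_index_less[OF m_ge_1] .
  have "(LBINT r:cell_ivl m ?i. exp (- \<sigma> * r) * Fderiv x0 (Qms \<sigma> m u) r)
       = (LBINT r:cell_ivl m ?i. 2 * (\<Sum>j<m. (real m * cint_exp u j) * cell_conv prim_damped m j r))"
  proof (rule set_lebesgue_integral_cong)
    show "\<forall>r. r \<in> cell_ivl m ?i \<longrightarrow> exp (- \<sigma> * r) * Fderiv x0 (Qms \<sigma> m u) r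
        = 2 * (\<Sum>j<m. (real m * cint_exp u j) * cell_conv prim_damped m j r)"
    proof (intro allI impI)
      fix r assume "r \<in> cell_ivl m ?i"
      then have r: "0 \<le> r" "r \<le> 1" using cell_ivl_subset[OF i] by auto
      have "exp (- \<sigma> * r) * exp (\<sigma> * r) = 1" by (simp add: exp_add[symmetric])
      then show "exp (- \<sigma> * r) * Fderiv x0 (Qms \<sigma> m u) r
          = 2 * (\<Sum>j<m. (real m * cint_exp u j) * cell_conv prim_damped m j r)"
        by (simp add: Fderiv_Qms_eq_sum[OF r] algebra_simps)
    qed
  qed simp
  also have "\<dots> = 2 * (\<Sum>j<m. (real m * cint_exp u j) * conv_weight_exp ?i j)"
    by (simp add: set_integral_sum conv_weight_exp_def
        set_integrable_cell_ivl_continuous[OF continuous_cell_conv[OF continuous_prim_damped]])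
  finally show ?thesis
    by (simp add: Qms_def cell_eq_cell_ivl power2_eq_square sum_distrib_left algebra_simps)
qed

lemma L2_QFQ: "L2 (QFQ u)"
proof -
  have "QFQ u = (\<lambda>s. 2 * real m ^ 2 * (\<Sum>j<m. cint u j * conv_weight (cell_index m s) j))"
    by (simp add: fun_eq_iff QFQ_eq_sum)
  then show ?thesis
    using step_L2[OF m_ge_1, of "\<lambda>i. 2 * real m ^ 2 * (\<Sum>j<m. cint u j * conv_weight i j)"] by simp
qed

lemma cint_step: "i < m \<Longrightarrow> cint (\<lambda>t. \<gamma> (cell_index m t)) i = \<gamma> i / real m"
  unfolding cint_def
  by (subst set_lebesgue_integral_cong[where g="\<lambda>_. \<gamma> i"])
    (auto simp: cell_index_cell_ivl set_integral_cell_ivl_const)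

lemma cint_lincomb:
  assumes "L2 v" "L2 w" "i < m"
  shows "cint (\<lambda>t. p * v t + q * w t) i = p * cint v i + q * cint w i"
  unfolding cint_def using assms
  by (simp add: set_integral_add set_integrable_cell_ivl_mult_L2[where w="\<lambda>_. p"]
      set_integrable_cell_ivl_mult_L2[where w="\<lambda>_. q"])

lemma QFQ_diff:
  assumes "L2 u" "L2 w"
  shows "QFQ (\<lambda>t. u t - w t) s = QFQ u s - QFQ w s"
proof -
  have diff: "cint (\<lambda>t. u t - w t) j = cint u j - cint w j" if "j < m" for j
    using cint_lincomb[OF assms that, where p=1 and q="-1"] by simp
  show ?thesis unfolding QFQ_eq_sum by (simp add: diff algebra_simps sum_subtractf)
qed

section \<open>The convolution weights\<close>

definition mass_x0 :: real where
  "mass_x0 = prim_x0 1 - prim_x0 0"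

text \<open>cumul u is the integral of x0 over [0, u], and 0 for u \<le> 0.\<close>
definition cumul :: "real \<Rightarrow> real" where
  "cumul u = prim_x0 (max u 0) - prim_x0 0"

lemma prim_x0_mono: "u \<le> w \<Longrightarrow> prim_x0 u \<le> prim_x0 w"
  by (rule DERIV_nonneg_imp_nondecreasing) (use prim_x0_deriv x0_ext_pos in \<open>auto intro: less_imp_le\<close>)

lemma mass_x0_eq_integral: "mass_x0 = (LBINT t:{0..1}. x0 t)"
proof -
  have "mass_x0 = (LBINT t:{0..1}. x0_ext t)"
    unfolding mass_x0_def by (rule set_integral_FTC_Icc[symmetric]) (use prim_x0_deriv continuous_x0_ext in auto)
  also have "\<dots> = (LBINT t:{0..1}. x0 t)"
    by (rule set_lebesgue_integral_cong) (auto simp: x0_ext_eq)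
  finally show ?thesis .
qed

lemma mass_x0_pos: "mass_x0 > 0"
  unfolding mass_x0_def
  using DERIV_pos_imp_increasing[of 0 1 prim_x0] prim_x0_deriv x0_ext_pos by auto

lemma mass_x0_le_norm0: "mass_x0 \<le> norm0 x0"
proof -
  have "mass_x0^2 \<le> measure lborel {0..1::real} * (LBINT t:{0..1}. (x0 t)^2)"
    unfolding mass_x0_eq_integral
    by (intro square_set_integral_le borel_integrable_atLeastAtMost' continuous_intros continuous_x0) auto
  then have "mass_x0^2 \<le> (LBINT t:{0..1}. (x0 t)^2)" by simp
  then show ?thesis unfolding norm0_def by (rule real_le_rsqrt)
qed

lemma cell_conv_prim_x0: "cell_conv prim_x0 m j r = cumul (r - real j / real m) - cumul (r - real (j+1) / real m)"
  by (simp add: cell_conv_def cumul_def)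

lemma cumul_mono: "u \<le> w \<Longrightarrow> cumul u \<le> cumul w"
  unfolding cumul_def using prim_x0_mono[of "max u 0" "max w 0"] by auto

lemma cumul_nonpos: "u \<le> 0 \<Longrightarrow> cumul u = 0"
  unfolding cumul_def by (simp add: max_def)

lemma cumul_le_mass_x0: "u \<le> 1 \<Longrightarrow> cumul u \<le> mass_x0"
  unfolding cumul_def mass_x0_def using prim_x0_mono[of "max u 0" 1] by auto

lemma continuous_cumul: "continuous_on UNIV cumul"
  unfolding cumul_def by (intro continuous_intros continuous_on_compose2[OF continuous_prim_x0]) auto

lemma conv_weight_nonneg: "conv_weight i j \<ge> 0"
proof -
  have "cell_conv prim_x0 m j r \<ge> 0" for r
    unfolding cell_conv_prim_x0 using m_pos by (simp add: cumul_mono divide_right_mono)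
  then show ?thesis
    unfolding conv_weight_def set_lebesgue_integral_def
    by (intro Bochner_Integration.integral_nonneg) (simp add: indicator_def)
qed

lemma conv_weight_upper_eq_0:
  assumes ij: "i < j"
  shows "conv_weight i j = 0"
proof -
  have "cell_conv prim_x0 m j r = 0" if r: "r \<in> cell_ivl m i" for r
  proof -
    have "real (i+1) / real m \<le> real j / real m" using ij m_pos by (simp add: divide_right_mono)
    then have "r \<le> real j / real m" using r by (simp add: cell_ivl_def)
    moreover have "real j / real m \<le> real (j+1) / real m" using m_pos by (simp add: divide_right_mono)
    ultimately show ?thesis unfolding cell_conv_prim_x0 by (simp add: cumul_nonpos)
  qed
  then have "conv_weight i j = (LBINT r:cell_ivl m i. 0)"
    unfolding conv_weight_def by (intro set_lebesgue_integral_cong) auto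
  then show ?thesis by simp
qed

text \<open>Summing over j telescopes cell_conv to cumul r \<le> mass_x0.\<close>
lemma conv_weight_row_sum_le:
  assumes i: "i < m"
  shows "(\<Sum>j<m. conv_weight i j) \<le> mass_x0 / real m"
proof -
  have "(\<Sum>j<m. conv_weight i j) = (LBINT r:cell_ivl m i. (\<Sum>j<m. cell_conv prim_x0 m j r))"
    unfolding conv_weight_def
    by (rule set_integral_sum[symmetric])
      (rule set_integrable_cell_ivl_continuous[OF continuous_cell_conv[OF continuous_prim_x0]])
  also have "\<dots> = (LBINT r:cell_ivl m i. cumul r)"
  proof (rule set_lebesgue_integral_cong)
    show "\<forall>r. r \<in> cell_ivl m i \<longrightarrow> (\<Sum>j<m. cell_conv prim_x0 m j r) = cumul r"
    proof (intro allI impI)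
      fix r assume r: "r \<in> cell_ivl m i"
      have "(\<Sum>j<m. cell_conv prim_x0 m j r)
          = (\<Sum>j<m. (\<lambda>j. cumul (r - real j / real m)) j - (\<lambda>j. cumul (r - real j / real m)) (Suc j))"
        unfolding cell_conv_prim_x0 by simp
      also have "\<dots> = cumul r - cumul (r - 1)" using m_pos by (subst sum_lessThan_telescope') simp
      also have "cumul (r - 1) = 0" using cell_ivl_subset[OF i] r by (intro cumul_nonpos) auto
      finally show "(\<Sum>j<m. cell_conv prim_x0 m j r) = cumul r" by simp
    qed
  qed simp
  also have "\<dots> \<le> (LBINT r:cell_ivl m i. mass_x0)"
    by (rule set_integral_mono)
      (use cell_ivl_subset[OF i] in \<open>auto intro!: set_integrable_cell_ivl_continuous continuous_cumul cumul_le_mass_x0\<close>)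
  also have "\<dots> = mass_x0 / real m" by (rule set_integral_cell_ivl_const[OF i])
  finally show ?thesis .
qed

definition cumul2 :: "real \<Rightarrow> real" where
  "cumul2 = (SOME G. \<forall>x. (G has_real_derivative cumul x) (at x))"

lemma cumul2_deriv: "(cumul2 has_real_derivative cumul x) (at x)"
  using someI_ex[OF continuous_on_UNIV_has_antiderivative[OF continuous_cumul]] unfolding cumul2_def by blast

lemma set_integral_cumul_shift: "(LBINT r:{0..1}. cumul (r - c)) = cumul2 (1 - c) - cumul2 (- c)"
proof -
  have "((\<lambda>r. cumul2 (r - c)) has_real_derivative cumul (x - c)) (at x)" for x
  proof -
    have "((\<lambda>r. r - c) has_real_derivative 1) (at x)" by (auto intro!: derivative_eq_intros)
    from DERIV_chain2[OF cumul2_deriv[of "x - c"] this] show ?thesis by simp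
  qed
  then have "(LBINT r:{0..1}. cumul (r - c)) = (\<lambda>r. cumul2 (r - c)) 1 - (\<lambda>r. cumul2 (r - c)) 0"
    by (rule set_integral_FTC_Icc) (auto intro!: continuous_on_compose2[OF continuous_cumul] continuous_intros)
  then show ?thesis by simp
qed

lemma cumul2_diff_le: "p \<le> q \<Longrightarrow> q \<le> 1 \<Longrightarrow> cumul2 q - cumul2 p \<le> mass_x0 * (q - p)"
proof -
  assume pq: "p \<le> q" "q \<le> 1"
  have "cumul2 q - cumul2 p = (LBINT r:{p..q}. cumul r)"
    by (rule set_integral_FTC_Icc[symmetric]) (use pq cumul2_deriv continuous_cumul in auto)
  also have "\<dots> \<le> (LBINT r:{p..q}. mass_x0)"
    by (rule set_integral_mono)
      (use pq in \<open>auto intro!: borel_integrable_atLeastAtMost' continuous_on_subset[OF continuous_cumul] cumul_le_mass_x0\<close>)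
  also have "\<dots> = mass_x0 * (q - p)" using pq by (simp add: set_integral_const measure_def)
  finally show ?thesis .
qed

lemma cumul2_diff_nonpos: "p \<le> q \<Longrightarrow> q \<le> 0 \<Longrightarrow> cumul2 q - cumul2 p = 0"
proof -
  assume pq: "p \<le> q" "q \<le> 0"
  have "cumul2 q - cumul2 p = (LBINT r:{p..q}. cumul r)"
    by (rule set_integral_FTC_Icc[symmetric]) (use pq cumul2_deriv continuous_cumul in auto)
  also have "\<dots> = (LBINT r:{p..q}. 0)"
    by (rule set_lebesgue_integral_cong) (use pq in \<open>auto intro!: cumul_nonpos\<close>)
  finally show ?thesis by simp
qed

lemma conv_weight_col_sum_le:
  assumes j: "j < m"
  shows "(\<Sum>i<m. conv_weight i j) \<le> mass_x0 / real m"
proof -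
  let ?p = "real j / real m" and ?q = "real (j+1) / real m"
  have pq: "0 \<le> ?p" "?p \<le> ?q" "?q \<le> 1" using j m_pos by (simp_all add: divide_simps)
  have "(\<Sum>i<m. conv_weight i j) = (LBINT r:{0..1}. cell_conv prim_x0 m j r * 1)"
    unfolding conv_weight_def
    by (subst set_integral_step_eq_sum[OF m_ge_1])
      (auto intro!: borel_integrable_atLeastAtMost' continuous_on_subset[OF continuous_cell_conv[OF continuous_prim_x0]])
  also have "\<dots> = (LBINT r:{0..1}. cumul (r - ?p)) - (LBINT r:{0..1}. cumul (r - ?q))"
    unfolding cell_conv_prim_x0
    by (simp, rule set_integral_diff)
      (auto intro!: borel_integrable_atLeastAtMost' continuous_on_compose2[OF continuous_cumul] continuous_intros)
  also have "\<dots> = (cumul2 (1 - ?p) - cumul2 (1 - ?q)) - (cumul2 (- ?p) - cumul2 (- ?q))"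
    by (simp add: set_integral_cumul_shift)
  also have "cumul2 (- ?p) - cumul2 (- ?q) = 0"
    by (rule cumul2_diff_nonpos) (use pq in auto)
  also have "cumul2 (1 - ?p) - cumul2 (1 - ?q) \<le> mass_x0 * ((1 - ?p) - (1 - ?q))"
    by (rule cumul2_diff_le) (use pq in auto)
  also have "(1 - ?p) - (1 - ?q) = 1 / real m"
    using m_pos by (simp add: divide_simps)
  finally show ?thesis by simp
qed

section \<open>Comparing the two bilinear forms\<close>

definition cint_exp2 :: "(real \<Rightarrow> real) \<Rightarrow> nat \<Rightarrow> real" where
  "cint_exp2 v i = (LBINT t:cell_ivl m i. exp (- 2 * \<sigma> * t) * v t)"

definition cint_abs :: "(real \<Rightarrow> real) \<Rightarrow> nat \<Rightarrow> real" where
  "cint_abs v i = (LBINT t:cell_ivl m i. exp (- \<sigma> * t) * \<bar>v t\<bar>)"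

definition cint_sq :: "(real \<Rightarrow> real) \<Rightarrow> nat \<Rightarrow> real" where
  "cint_sq v i = (LBINT t:cell_ivl m i. exp (- 2 * \<sigma> * t) * (v t)^2)"

lemma inner_QFQ_eq_sum:
  assumes v: "L2 v"
  shows "inner_sigma \<sigma> (QFQ v) v = 2 * real m ^ 2 * (\<Sum>i<m. \<Sum>j<m. cint v j * conv_weight i j * cint_exp2 v i)"
proof -
  define \<gamma> where "\<gamma> i = 2 * real m ^ 2 * (\<Sum>j<m. cint v j * conv_weight i j)" for i
  have "inner_sigma \<sigma> (QFQ v) v = (LBINT t:{0..1}. (exp (- 2 * \<sigma> * t) * v t) * \<gamma> (cell_index m t))"
    unfolding inner_sigma_def QFQ_eq_sum \<gamma>_def by (simp add: algebra_simps)
  also have "\<dots> = (\<Sum>i<m. \<gamma> i * cint_exp2 v i)"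
    unfolding cint_exp2_def
    by (rule set_integral_step_eq_sum[OF m_ge_1 set_integrable_continuous_mult_L2[OF v]]) (intro continuous_intros)
  also have "\<dots> = 2 * real m ^ 2 * (\<Sum>i<m. \<Sum>j<m. cint v j * conv_weight i j * cint_exp2 v i)"
    by (simp add: \<gamma>_def sum_distrib_left sum_distrib_right algebra_simps)
  finally show ?thesis .
qed

lemma inner_QFQs_eq_sum:
  assumes v: "L2 v"
  shows "inner_sigma \<sigma> (QFQs v) v = 2 * real m ^ 2 * (\<Sum>i<m. \<Sum>j<m. cint_exp v j * conv_weight_exp i j * cint_exp v i)"
proof -
  define \<gamma> where "\<gamma> i = 2 * real m ^ 2 * (\<Sum>j<m. cint_exp v j * conv_weight_exp i j)" for i
  have "exp (- 2 * \<sigma> * t) * (exp (\<sigma> * t) * x) * y = exp (- \<sigma> * t) * y * x" for t x y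
    by (simp add: mult_exp_exp algebra_simps)
  then have "inner_sigma \<sigma> (QFQs v) v = (LBINT t:{0..1}. (exp (- \<sigma> * t) * v t) * \<gamma> (cell_index m t))"
    unfolding inner_sigma_def QFQs_eq_sum \<gamma>_def[symmetric] by (simp only:)
  also have "\<dots> = (\<Sum>i<m. \<gamma> i * cint_exp v i)"
    unfolding cint_exp_def
    by (rule set_integral_step_eq_sum[OF m_ge_1 set_integrable_continuous_mult_L2[OF v]]) (intro continuous_intros)
  also have "\<dots> = 2 * real m ^ 2 * (\<Sum>i<m. \<Sum>j<m. cint_exp v j * conv_weight_exp i j * cint_exp v i)"
    by (simp add: \<gamma>_def sum_distrib_left sum_distrib_right algebra_simps)
  finally show ?thesis .
qed

lemma inner_sigma_self_eq_sum:
  assumes v: "L2 v"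
  shows "inner_sigma \<sigma> v v = (\<Sum>i<m. cint_sq v i)"
proof -
  have "inner_sigma \<sigma> v v = (LBINT t:{0..1}. (exp (- 2 * \<sigma> * t) * (v t)^2) * 1)"
    unfolding inner_sigma_def by (simp add: power2_eq_square mult.assoc)
  also have "\<dots> = (\<Sum>i<m. 1 * cint_sq v i)"
    unfolding cint_sq_def
    by (rule set_integral_step_eq_sum[OF m_ge_1])
      (auto simp: power2_eq_square mult.assoc[symmetric] intro!: set_integrable_continuous_mult_L2_L2[OF v v] continuous_intros)
  finally show ?thesis by simp
qed

abbreviation damped :: "(real \<Rightarrow> real) \<Rightarrow> real \<Rightarrow> real" where
  "damped v s \<equiv> exp (- \<sigma> * s) * v s"

lemma cint_exp2_eq: "cint_exp2 v i = (LBINT s:cell_ivl m i. exp (- \<sigma> * s) * damped v s)"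
proof -
  have "exp (- 2 * \<sigma> * s) = exp (- \<sigma> * s) * exp (- \<sigma> * s)" for s
    by (simp add: exp_add[symmetric])
  then show ?thesis unfolding cint_exp2_def by (simp add: mult.assoc)
qed

lemma cint_eq: "cint v j = (LBINT s:cell_ivl m j. exp (\<sigma> * s) * damped v s)"
proof -
  have "exp (\<sigma> * s) * exp (- \<sigma> * s) = 1" for s by (simp add: exp_add[symmetric])
  then show ?thesis unfolding cint_def by (simp add: mult.assoc[symmetric])
qed

lemma cint_exp_eq: "cint_exp v j = (LBINT s:cell_ivl m j. 1 * damped v s)"
  unfolding cint_exp_def by simp

lemma cint_abs_nonneg: "cint_abs v i \<ge> 0"
  unfolding cint_abs_def set_lebesgue_integral_def
  by (rule Bochner_Integration.integral_nonneg) (auto simp: indicator_def)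

lemma abs_set_integral_damped_le:
  fixes w :: "real \<Rightarrow> real"
  assumes v: "L2 v" and k: "k < m" and w: "continuous_on UNIV w"
    and K: "\<And>s. s \<in> cell_ivl m k \<Longrightarrow> \<bar>w s\<bar> \<le> K"
  shows "\<bar>LBINT s:cell_ivl m k. w s * damped v s\<bar> \<le> K * cint_abs v k"
proof -
  have i1: "set_integrable lborel (cell_ivl m k) (\<lambda>s. w s * damped v s)"
    using set_integrable_cell_ivl_mult_L2[OF v _ k, of "\<lambda>s. w s * exp (- \<sigma> * s)"] w
    by (simp add: continuous_intros mult.assoc)
  have i2: "set_integrable lborel (cell_ivl m k) (\<lambda>s. K * \<bar>damped v s\<bar>)"
    by (intro set_integrable_mult_right set_integrable_abs set_integrable_cell_ivl_mult_L2[OF v _ k] continuous_intros)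
  have "\<bar>LBINT s:cell_ivl m k. w s * damped v s\<bar> \<le> (LBINT s:cell_ivl m k. \<bar>w s * damped v s\<bar>)"
    using set_integral_norm_bound[OF i1] by simp
  also have "\<dots> \<le> (LBINT s:cell_ivl m k. K * \<bar>damped v s\<bar>)"
    by (rule set_integral_mono[OF set_integrable_abs[OF i1] i2]) (simp add: K abs_mult mult_right_mono)
  also have "\<dots> = K * cint_abs v k" by (simp add: cint_abs_def abs_mult)
  finally show ?thesis .
qed

lemma set_integral_damped_diff:
  fixes w1 w2 :: "real \<Rightarrow> real"
  assumes v: "L2 v" and k: "k < m" and w1: "continuous_on UNIV w1" and w2: "continuous_on UNIV w2"
  shows "(LBINT s:cell_ivl m k. w1 s * damped v s) - c * (LBINT s:cell_ivl m k. w2 s * damped v s)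
       = (LBINT s:cell_ivl m k. (w1 s - c * w2 s) * damped v s)"
proof -
  have "set_integrable lborel (cell_ivl m k) (\<lambda>s. (w1 s * exp (- \<sigma> * s)) * v s)"
    "set_integrable lborel (cell_ivl m k) (\<lambda>s. (c * (w2 s * exp (- \<sigma> * s))) * v s)"
    by (rule set_integrable_cell_ivl_mult_L2[OF v _ k]; intro continuous_intros w1 w2)+
  then show ?thesis
    by (simp add: set_integral_diff(2)[symmetric] mult.assoc left_diff_distrib)
qed

lemma exp_bounds_cell:
  assumes "real k / real m \<le> s" "s \<le> real (k+1) / real m"
  shows "exp (- \<sigma> * (real (k+1) / real m)) \<le> exp (- \<sigma> * s)" "exp (- \<sigma> * s) \<le> exp (- \<sigma> * (real k / real m))"
    "exp (\<sigma> * (real k / real m)) \<le> exp (\<sigma> * s)" "exp (\<sigma> * s) \<le> exp (\<sigma> * (real (k+1) / real m))"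
  using mult_left_mono[OF assms(1), of \<sigma>] mult_left_mono[OF assms(2), of \<sigma>] sigma_pos by simp_all

lemma cell_ivl_bounds: "s \<in> cell_ivl m k \<Longrightarrow> real k / real m \<le> s \<and> s \<le> real (k+1) / real m"
  by (simp add: cell_ivl_def)

lemma cint_exp2_close:
  assumes v: "L2 v" and i: "i < m" and r: "r \<in> cell_ivl m i"
  shows "\<bar>cint_exp2 v i - exp (- \<sigma> * r) * cint_exp v i\<bar>
    \<le> (exp (- \<sigma> * (real i / real m)) - exp (- \<sigma> * (real (i+1) / real m))) * cint_abs v i"
proof -
  have "cint_exp2 v i - exp (- \<sigma> * r) * cint_exp v i
      = (LBINT s:cell_ivl m i. (exp (- \<sigma> * s) - exp (- \<sigma> * r) * 1) * damped v s)"
    unfolding cint_exp2_eq cint_exp_eq by (rule set_integral_damped_diff[OF v i]) (intro continuous_intros)+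
  also have "\<bar>\<dots>\<bar> \<le> (exp (- \<sigma> * (real i / real m)) - exp (- \<sigma> * (real (i+1) / real m))) * cint_abs v i"
  proof (rule abs_set_integral_damped_le[OF v i])
    fix s assume "s \<in> cell_ivl m i"
    then have "real i / real m \<le> s" "s \<le> real (i+1) / real m"
      "real i / real m \<le> r" "r \<le> real (i+1) / real m"
      using r by (simp_all add: cell_ivl_def)
    from exp_bounds_cell(1,2)[OF this(1,2)] exp_bounds_cell(1,2)[OF this(3,4)]
    show "\<bar>exp (- \<sigma> * s) - exp (- \<sigma> * r) * 1\<bar>
        \<le> exp (- \<sigma> * (real i / real m)) - exp (- \<sigma> * (real (i+1) / real m))"
      unfolding abs_le_iff mult_1_right by linarith
  qed (intro continuous_intros)
  finally show ?thesis .
qed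

lemma cint_close:
  assumes v: "L2 v" and j: "j < m" and t: "real j / real m \<le> t" "t \<le> real (j+1) / real m"
  shows "\<bar>cint v j - exp (\<sigma> * t) * cint_exp v j\<bar>
    \<le> (exp (\<sigma> * (real (j+1) / real m)) - exp (\<sigma> * (real j / real m))) * cint_abs v j"
proof -
  have "cint v j - exp (\<sigma> * t) * cint_exp v j
      = (LBINT s:cell_ivl m j. (exp (\<sigma> * s) - exp (\<sigma> * t) * 1) * damped v s)"
    unfolding cint_eq cint_exp_eq by (rule set_integral_damped_diff[OF v j]) (intro continuous_intros)+
  also have "\<bar>\<dots>\<bar> \<le> (exp (\<sigma> * (real (j+1) / real m)) - exp (\<sigma> * (real j / real m))) * cint_abs v j"
  proof (rule abs_set_integral_damped_le[OF v j])
    fix s assume "s \<in> cell_ivl m j"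
    then have "real j / real m \<le> s" "s \<le> real (j+1) / real m" by (simp_all add: cell_ivl_def)
    from exp_bounds_cell(3,4)[OF this] exp_bounds_cell(3,4)[OF t]
    show "\<bar>exp (\<sigma> * s) - exp (\<sigma> * t) * 1\<bar>
        \<le> exp (\<sigma> * (real (j+1) / real m)) - exp (\<sigma> * (real j / real m))"
      unfolding abs_le_iff mult_1_right by linarith
  qed (intro continuous_intros)
  finally show ?thesis .
qed

lemma abs_cint_le:
  assumes v: "L2 v" and j: "j < m"
  shows "\<bar>cint v j\<bar> \<le> exp (\<sigma> * (real (j+1) / real m)) * cint_abs v j"
  unfolding cint_eq
  by (rule abs_set_integral_damped_le[OF v j]) (auto intro!: continuous_intros dest!: cell_ivl_bounds exp_bounds_cell(4))

lemma abs_cint_exp_le: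
  assumes v: "L2 v" and i: "i < m"
  shows "\<bar>cint_exp v i\<bar> \<le> cint_abs v i"
  using abs_set_integral_damped_le[OF v i, of "\<lambda>_. 1" 1] unfolding cint_exp_eq by simp

text \<open>Replace exp(-\<sigma>s) by exp(-\<sigma>r) on \<Delta>_i and exp(\<sigma>s) by exp(\<sigma>t) on \<Delta>_j; both errors are
  exp(\<sigma>(j - i)/m) (exp(\<sigma>/m) - 1) relative to T_i T_j, and j \<le> i because t \<le> r.\<close>
lemma cint_products_close:
  assumes v: "L2 v" and i: "i < m" and j: "j < m" and r: "r \<in> cell_ivl m i"
    and t: "real j / real m \<le> t" "t \<le> real (j+1) / real m" "t \<le> r"
  shows "\<bar>cint_exp2 v i * cint v j - exp (- \<sigma> * (r - t)) * (cint_exp v i * cint_exp v j)\<bar>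
    \<le> 2 * (exp (\<sigma> / real m) - 1) * cint_abs v i * cint_abs v j"
proof -
  define p where "p = exp (- \<sigma> * (real i / real m))"
  define P where "P = exp (- \<sigma> * (real (i+1) / real m))"
  define q where "q = exp (\<sigma> * (real j / real m))"
  define Q where "Q = exp (\<sigma> * (real (j+1) / real m))"
  let ?Ti = "cint_abs v i" and ?Tj = "cint_abs v j"
  have "real j / real m < real (i+1) / real m" using t r by (auto simp: cell_ivl_def)
  then have ji: "j \<le> i" using m_pos by (simp add: divide_less_cancel)
  have A1: "\<bar>cint_exp2 v i - exp (- \<sigma> * r) * cint_exp v i\<bar> \<le> (p - P) * ?Ti"
    unfolding p_def P_def by (rule cint_exp2_close[OF v i r])
  have A2: "\<bar>cint v j - exp (\<sigma> * t) * cint_exp v j\<bar> \<le> (Q - q) * ?Tj"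
    unfolding q_def Q_def by (rule cint_close[OF v j t(1,2)])
  have A3: "\<bar>cint v j\<bar> \<le> Q * ?Tj"
    unfolding Q_def by (rule abs_cint_le[OF v j])
  have A4: "\<bar>exp (- \<sigma> * r) * cint_exp v i\<bar> \<le> p * ?Ti"
    unfolding abs_mult p_def
    using abs_cint_exp_le[OF v i] exp_bounds_cell(2)[OF cell_ivl_bounds[OF r, THEN conjunct1]
        cell_ivl_bounds[OF r, THEN conjunct2]] cint_abs_nonneg
    by (simp add: mult_mono)
  have "cint_exp2 v i * cint v j - exp (- \<sigma> * (r - t)) * (cint_exp v i * cint_exp v j)
      = (cint_exp2 v i - exp (- \<sigma> * r) * cint_exp v i) * cint v j
        + (exp (- \<sigma> * r) * cint_exp v i) * (cint v j - exp (\<sigma> * t) * cint_exp v j)"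
  proof -
    have "exp (- \<sigma> * (r - t)) = exp (- \<sigma> * r) * exp (\<sigma> * t)" by (simp add: mult_exp_exp algebra_simps)
    then show ?thesis by (simp add: algebra_simps)
  qed
  then have "\<bar>cint_exp2 v i * cint v j - exp (- \<sigma> * (r - t)) * (cint_exp v i * cint_exp v j)\<bar>
      \<le> \<bar>cint_exp2 v i - exp (- \<sigma> * r) * cint_exp v i\<bar> * \<bar>cint v j\<bar>
        + \<bar>exp (- \<sigma> * r) * cint_exp v i\<bar> * \<bar>cint v j - exp (\<sigma> * t) * cint_exp v j\<bar>"
    by (metis abs_mult abs_triangle_ineq)
  also have "\<dots> \<le> ((p - P) * ?Ti) * (Q * ?Tj) + (p * ?Ti) * ((Q - q) * ?Tj)"
    using A1 A4 by (intro add_mono mult_mono A1 A2 A3 A4) (auto intro: order_trans[OF abs_ge_zero])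
  also have "\<dots> = ?Ti * ?Tj * (2 * (exp (\<sigma> / real m) - 1) * exp (\<sigma> * (real j - real i) / real m))"
    unfolding p_def P_def q_def Q_def using m_pos by (simp add: mult_exp_exp field_simps)
  also have "\<dots> \<le> ?Ti * ?Tj * (2 * (exp (\<sigma> / real m) - 1) * 1)"
    using ji sigma_pos m_pos cint_abs_nonneg
    by (intro mult_left_mono) (simp_all add: mult_nonneg_nonpos divide_nonpos_pos)
  finally show ?thesis by (simp add: algebra_simps)
qed

lemma set_integrable_conv_domain:
  fixes w :: "real \<Rightarrow> real"
  assumes "continuous_on UNIV w"
  shows "set_integrable lborel ({0..r} \<inter> {t. cell_index m t = j}) (\<lambda>t. w (r - t))"
proof -
  have "continuous_on {0..r} (\<lambda>t. w (r - t))"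
    by (rule continuous_on_compose2[OF assms]) (auto intro!: continuous_intros)
  moreover have "{0..r} \<inter> {t. cell_index m t = j} \<in> sets borel" by measurable
  ultimately show ?thesis by (rule set_integrable_continuous_subset) auto
qed

lemma cell_conv_diff_le:
  assumes v: "L2 v" and i: "i < m" and j: "j < m" and r: "r \<in> cell_ivl m i"
  shows "\<bar>cint_exp2 v i * cint v j * cell_conv prim_x0 m j r - cint_exp v i * cint_exp v j * cell_conv prim_damped m j r\<bar>
     \<le> 2 * (exp (\<sigma> / real m) - 1) * cint_abs v i * cint_abs v j * cell_conv prim_x0 m j r"
proof -
  define S where "S = {0..r} \<inter> {t. cell_index m t = j}"
  define E where "E = 2 * (exp (\<sigma> / real m) - 1) * cint_abs v i * cint_abs v j"
  define g where "g t = cint_exp2 v i * cint v j * x0_ext (r - t) - cint_exp v i * cint_exp v j * x0_damped (r - t)" for t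
  have r01: "0 \<le> r" "r \<le> 1" using cell_ivl_subset[OF i] r by auto
  have ig: "set_integrable lborel S g"
    unfolding S_def g_def
    by (intro set_integral_diff(1) set_integrable_mult_right set_integrable_conv_domain continuous_x0_ext continuous_x0_damped)
  have iE: "set_integrable lborel S (\<lambda>t. E * x0_ext (r - t))"
    unfolding S_def by (intro set_integrable_mult_right set_integrable_conv_domain continuous_x0_ext)
  have conv: "cell_conv prim_x0 m j r = (LBINT t:S. x0_ext (r - t))" "cell_conv prim_damped m j r = (LBINT t:S. x0_damped (r - t))"
    using set_integral_conv_cell[OF m_ge_1 prim_x0_deriv continuous_x0_ext r01 j]
      set_integral_conv_cell[OF m_ge_1 prim_damped_deriv continuous_x0_damped r01 j]
    by (simp_all add: S_def)
  have "cint_exp2 v i * cint v j * cell_conv prim_x0 m j r - cint_exp v i * cint_exp v j * cell_conv prim_damped m j r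
      = (LBINT t:S. g t)"
    unfolding conv g_def S_def
    by (subst set_integral_diff(2))
      (auto intro!: set_integrable_conv_domain continuous_intros continuous_x0_ext continuous_x0_damped)
  also have "\<bar>\<dots>\<bar> \<le> (LBINT t:S. \<bar>g t\<bar>)"
    using set_integral_norm_bound[OF ig] by simp
  also have "\<dots> \<le> (LBINT t:S. E * x0_ext (r - t))"
  proof (rule set_integral_mono[OF set_integrable_abs[OF ig] iE])
    fix t assume "t \<in> S"
    then have "t \<in> {0..r} \<inter> {t. cell_index m t = j}" by (simp only: S_def)
    note t = conv_domain_memD[OF m_ge_1 r01 this]
    have "g t = x0_ext (r - t) * (cint_exp2 v i * cint v j - exp (- \<sigma> * (r - t)) * (cint_exp v i * cint_exp v j))"
      unfolding g_def x0_damped_def by (simp add: algebra_simps)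
    then have "\<bar>g t\<bar> = x0_ext (r - t) * \<bar>cint_exp2 v i * cint v j - exp (- \<sigma> * (r - t)) * (cint_exp v i * cint_exp v j)\<bar>"
      using x0_ext_pos[of "r - t"] by (simp add: abs_mult)
    also have "\<dots> \<le> x0_ext (r - t) * E"
      unfolding E_def using x0_ext_pos[of "r - t"]
      by (intro mult_left_mono cint_products_close[OF v i j r t]) simp
    finally show "\<bar>g t\<bar> \<le> E * x0_ext (r - t)" by (simp add: mult.commute)
  qed
  also have "\<dots> = E * cell_conv prim_x0 m j r" unfolding conv by simp
  finally show ?thesis unfolding E_def .
qed

lemma conv_weight_terms_close:
  assumes v: "L2 v" and i: "i < m" and j: "j < m"
  shows "\<bar>cint v j * conv_weight i j * cint_exp2 v i - cint_exp v j * conv_weight_exp i j * cint_exp v i\<bar>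
    \<le> 2 * (exp (\<sigma> / real m) - 1) * cint_abs v i * cint_abs v j * conv_weight i j"
proof -
  define E where "E = 2 * (exp (\<sigma> / real m) - 1) * cint_abs v i * cint_abs v j"
  define h where "h r = cint_exp2 v i * cint v j * cell_conv prim_x0 m j r
    - cint_exp v i * cint_exp v j * cell_conv prim_damped m j r" for r
  have iX: "set_integrable lborel (cell_ivl m i) (\<lambda>r. c * cell_conv prim_x0 m j r)" for c
    by (intro set_integrable_mult_right set_integrable_cell_ivl_continuous continuous_cell_conv continuous_prim_x0)
  have iZ: "set_integrable lborel (cell_ivl m i) (\<lambda>r. c * cell_conv prim_damped m j r)" for c
    by (intro set_integrable_mult_right set_integrable_cell_ivl_continuous continuous_cell_conv continuous_prim_damped)
  have ih: "set_integrable lborel (cell_ivl m i) h"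
    unfolding h_def by (rule set_integral_diff(1)[OF iX iZ])
  have "cint v j * conv_weight i j * cint_exp2 v i - cint_exp v j * conv_weight_exp i j * cint_exp v i
      = (LBINT r:cell_ivl m i. h r)"
    unfolding conv_weight_def conv_weight_exp_def h_def set_integral_diff(2)[OF iX iZ] by (simp add: mult_ac)
  also have "\<bar>\<dots>\<bar> \<le> (LBINT r:cell_ivl m i. \<bar>h r\<bar>)"
    using set_integral_norm_bound[OF ih] by simp
  also have "\<dots> \<le> (LBINT r:cell_ivl m i. E * cell_conv prim_x0 m j r)"
    by (rule set_integral_mono[OF set_integrable_abs[OF ih] iX])
      (unfold E_def h_def, rule cell_conv_diff_le[OF v i j])
  also have "\<dots> = E * conv_weight i j" unfolding conv_weight_def by simp
  finally show ?thesis unfolding E_def .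
qed

lemma cint_abs_sq_le:
  assumes v: "L2 v" and i: "i < m"
  shows "(cint_abs v i)^2 \<le> cint_sq v i / real m"
proof -
  have iv: "set_integrable lborel (cell_ivl m i) (\<lambda>t. exp (- \<sigma> * t) * v t)"
    by (rule set_integrable_cell_ivl_mult_L2[OF v _ i]) (intro continuous_intros)
  have sq: "(exp (- \<sigma> * t) * \<bar>v t\<bar>)^2 = exp (- 2 * \<sigma> * t) * v t * v t" for t
    by (simp add: power2_eq_square mult_exp_exp algebra_simps)
  have "(cint_abs v i)^2 \<le> measure lborel (cell_ivl m i) * (LBINT t:cell_ivl m i. (exp (- \<sigma> * t) * \<bar>v t\<bar>)^2)"
    unfolding cint_abs_def
  proof (rule square_set_integral_le)
    show "set_integrable lborel (cell_ivl m i) (\<lambda>t. exp (- \<sigma> * t) * \<bar>v t\<bar>)"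
      using set_integrable_abs[OF iv] by (simp add: abs_mult)
    show "set_integrable lborel (cell_ivl m i) (\<lambda>t. (exp (- \<sigma> * t) * \<bar>v t\<bar>)^2)"
      unfolding sq
      by (rule set_integrable_subset[OF inner_sigma_integrable[OF v v]]) (use cell_ivl_subset_01[OF i] in auto)
  qed (use i in \<open>auto simp: cell_ivl_def measure_def divide_simps\<close>)
  also have "measure lborel (cell_ivl m i) = 1 / real m"
    using i by (simp add: cell_ivl_def measure_def divide_simps)
  also have "(LBINT t:cell_ivl m i. (exp (- \<sigma> * t) * \<bar>v t\<bar>)^2) = cint_sq v i"
    unfolding cint_sq_def sq by (simp add: power2_eq_square mult.assoc)
  finally show ?thesis by simp
qed

lemma bilinear_forms_close:
  assumes v: "L2 v"
  shows "\<bar>(\<Sum>i<m. \<Sum>j<m. cint v j * conv_weight i j * cint_exp2 v i)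
      - (\<Sum>i<m. \<Sum>j<m. cint_exp v j * conv_weight_exp i j * cint_exp v i)\<bar>
    \<le> 2 * (exp (\<sigma> / real m) - 1) * mass_x0 * inner_sigma \<sigma> v v / real m ^ 2"
proof -
  define \<epsilon> where "\<epsilon> = exp (\<sigma> / real m) - 1"
  have \<epsilon>0: "\<epsilon> \<ge> 0" unfolding \<epsilon>_def using sigma_pos m_pos by simp
  have "\<bar>(\<Sum>i<m. \<Sum>j<m. cint v j * conv_weight i j * cint_exp2 v i)
      - (\<Sum>i<m. \<Sum>j<m. cint_exp v j * conv_weight_exp i j * cint_exp v i)\<bar>
    \<le> (\<Sum>i<m. \<Sum>j<m. \<bar>cint v j * conv_weight i j * cint_exp2 v i - cint_exp v j * conv_weight_exp i j * cint_exp v i\<bar>)"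
    unfolding sum_subtractf[symmetric] by (rule order_trans[OF sum_abs]) (intro sum_mono sum_abs)
  also have "\<dots> \<le> (\<Sum>i<m. \<Sum>j<m. 2 * \<epsilon> * cint_abs v i * cint_abs v j * conv_weight i j)"
    unfolding \<epsilon>_def by (intro sum_mono conv_weight_terms_close[OF v]) auto
  also have "\<dots> = 2 * \<epsilon> * (\<Sum>i<m. \<Sum>j<m. conv_weight i j * (cint_abs v i * cint_abs v j))"
    by (simp add: sum_distrib_left mult_ac)
  also have "\<dots> \<le> 2 * \<epsilon> * (mass_x0 / real m * (\<Sum>i<m. (cint_abs v i)^2))"
    using \<epsilon>0 conv_weight_row_sum_le conv_weight_col_sum_le
    by (intro mult_left_mono schur_test conv_weight_nonneg) auto
  also have "\<dots> \<le> 2 * \<epsilon> * (mass_x0 / real m * (\<Sum>i<m. cint_sq v i / real m))"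
    using \<epsilon>0 mass_x0_pos m_pos by (intro mult_left_mono sum_mono cint_abs_sq_le[OF v]) auto
  also have "\<dots> = 2 * \<epsilon> * mass_x0 * inner_sigma \<sigma> v v / real m ^ 2"
    by (simp add: inner_sigma_self_eq_sum[OF v] sum_divide_distrib[symmetric] power2_eq_square)
  finally show ?thesis unfolding \<epsilon>_def .
qed

lemma inner_QFQ_lower_bound:
  assumes v: "L2 v" and acc: "inner_sigma \<sigma> (QFQs v) v \<ge> 0"
  shows "inner_sigma \<sigma> (QFQ v) v \<ge> - (8 * \<sigma> * norm0 x0 / real m) * inner_sigma \<sigma> v v"
proof -
  let ?SA = "\<Sum>i<m. \<Sum>j<m. cint v j * conv_weight i j * cint_exp2 v i"
  let ?SB = "\<Sum>i<m. \<Sum>j<m. cint_exp v j * conv_weight_exp i j * cint_exp v i"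
  let ?\<epsilon> = "exp (\<sigma> / real m) - 1" and ?K = "inner_sigma \<sigma> v v"
  have m2: "real m ^ 2 > 0" using m_pos by simp
  define E where "E = 2 * ?\<epsilon> * mass_x0 * ?K"
  have "2 * real m ^ 2 * (?SB - ?SA) \<le> 2 * real m ^ 2 * (E / real m ^ 2)"
    using bilinear_forms_close[OF v, unfolded abs_le_iff] m2 unfolding E_def by (intro mult_left_mono) auto
  then have "inner_sigma \<sigma> (QFQs v) v - inner_sigma \<sigma> (QFQ v) v \<le> 2 * E"
    using m2 unfolding inner_QFQ_eq_sum[OF v] inner_QFQs_eq_sum[OF v] by (simp add: right_diff_distrib)
  then have "inner_sigma \<sigma> (QFQs v) v - inner_sigma \<sigma> (QFQ v) v \<le> 4 * ?\<epsilon> * mass_x0 * ?K"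
    unfolding E_def by (simp add: algebra_simps)
  moreover have "4 * ?\<epsilon> * mass_x0 * ?K \<le> 4 * (2 * (\<sigma> / real m)) * norm0 x0 * ?K"
    using sigma_pos sigma_le_m m_pos mass_x0_pos inner_sigma_self_nonneg[of \<sigma> v]
    by (intro mult_right_mono mult_mono exp_minus_1_le_twice mass_x0_le_norm0) auto
  ultimately show ?thesis using acc by simp
qed

section \<open>Accretivity and the resolvent\<close>

lemma inner_QFQ_shift_nonneg:
  assumes acc: "accretive \<sigma> QFQs" and v: "L2 v" and c: "c \<ge> 8 * \<sigma> * norm0 x0 / real m"
  shows "inner_sigma \<sigma> (QFQ v) v + c * inner_sigma \<sigma> v v \<ge> 0"
proof -
  have "inner_sigma \<sigma> (QFQ v) v \<ge> - (8 * \<sigma> * norm0 x0 / real m) * inner_sigma \<sigma> v v"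
    using acc v by (intro inner_QFQ_lower_bound) (auto simp: accretive_def)
  moreover have "(8 * \<sigma> * norm0 x0 / real m) * inner_sigma \<sigma> v v \<le> c * inner_sigma \<sigma> v v"
    using c by (intro mult_right_mono inner_sigma_self_nonneg)
  ultimately show ?thesis by linarith
qed

lemma accretive_QFQ_shift:
  assumes acc: "accretive \<sigma> QFQs" and c: "c \<ge> 8 * \<sigma> * norm0 x0 / real m"
  shows "accretive \<sigma> (\<lambda>v s. QFQ v s + c * v s)"
proof (unfold accretive_def, intro allI impI)
  fix v assume v: "L2 v"
  show "inner_sigma \<sigma> (\<lambda>s. QFQ v s + c * v s) v \<ge> 0"
    using inner_QFQ_shift_nonneg[OF acc v c] inner_sigma_lincomb[OF L2_QFQ v v, where p=1 and q=c] by simp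
qed

lemma accretivity_shift_pos: "8 * \<sigma> * norm0 x0 / real m > 0"
  using mass_x0_pos mass_x0_le_norm0 sigma_pos m_pos by simp

lemma inner_resolvent_eq:
  assumes "L2 u" "L2 w"
  shows "inner_sigma \<sigma> (\<lambda>s. \<alpha> * u s + QFQ u s) w = \<alpha> * inner_sigma \<sigma> u w + inner_sigma \<sigma> (QFQ u) w"
  using inner_sigma_lincomb[OF assms(1) L2_QFQ assms(2), where p=\<alpha> and q=1] by simp

lemma L2_resolvent: "L2 u \<Longrightarrow> L2 (\<lambda>s. \<alpha> * u s + QFQ u s)"
  using L2_lincomb[OF _ L2_QFQ, where u=u and p=\<alpha> and q=1] by simp

lemma resolvent_norm_le:
  assumes acc: "accretive \<sigma> QFQs" and \<alpha>: "\<alpha> \<ge> 16 * \<sigma> * norm0 x0 / real m"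
    and u: "L2 u" and v: "L2 v" and eq: "ae_eq01 (\<lambda>s. \<alpha> * u s + QFQ u s) v"
  shows "norm_sigma \<sigma> u \<le> 2 / \<alpha> * norm_sigma \<sigma> v"
proof -
  have \<alpha>0: "\<alpha> > 0" using \<alpha> accretivity_shift_pos by linarith
  define U where "U = inner_sigma \<sigma> u u"
  define V where "V = inner_sigma \<sigma> v v"
  have "\<alpha> / 2 * U \<le> \<alpha> * U + inner_sigma \<sigma> (QFQ u) u"
    using inner_QFQ_shift_nonneg[OF acc u, of "\<alpha> / 2"] \<alpha> unfolding U_def by simp
  also have "\<dots> = inner_sigma \<sigma> v u"
    using inner_sigma_cong_ae[OF L2_resolvent[OF u] v u eq, where \<sigma>=\<sigma>] inner_resolvent_eq[OF u u, where \<alpha>=\<alpha>]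
    unfolding U_def by simp
  also have "\<dots> \<le> \<alpha> / 4 * U + 1 / \<alpha> * V"
    unfolding U_def V_def by (rule inner_sigma_young[OF u v \<alpha>0])
  finally have "U \<le> (2 / \<alpha>)^2 * V"
    using \<alpha>0 by (simp add: field_simps power2_eq_square)
  then have "sqrt U \<le> sqrt ((2 / \<alpha>)^2 * V)" by (rule real_sqrt_le_mono)
  then show ?thesis
    using \<alpha>0 unfolding norm_sigma_def U_def V_def by (simp add: real_sqrt_mult)
qed

text \<open>Accretivity of QFQ + \<alpha>/2 applied to u - w, on which QFQ acts as -\<alpha>u.\<close>
lemma resolvent_QFQ_norm_le:
  assumes acc: "accretive \<sigma> QFQs" and \<alpha>: "\<alpha> \<ge> 16 * \<sigma> * norm0 x0 / real m"
    and u: "L2 u" and w: "L2 w" and eq: "ae_eq01 (\<lambda>s. \<alpha> * u s + QFQ u s) (QFQ w)"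
  shows "norm_sigma \<sigma> u \<le> 2 * norm_sigma \<sigma> w"
proof -
  have \<alpha>0: "\<alpha> > 0" using \<alpha> accretivity_shift_pos by linarith
  define d where "d t = u t - w t" for t
  have d: "L2 d" using L2_lincomb[OF u w, where p=1 and q="-1"] by (simp add: d_def[abs_def])
  have uw: "L2 (\<lambda>s. u s + w s)" using L2_lincomb[OF u w, where p=1 and q=1] by simp
  have "ae_eq01 (\<lambda>s. 1 * QFQ d s + \<alpha> / 2 * d s) (\<lambda>s. (- \<alpha> / 2) * (u s + w s))"
    using eq unfolding ae_eq01_def d_def[abs_def] QFQ_diff[OF u w]
    by (elim eventually_mono) (auto simp: field_simps)
  then have "0 \<le> inner_sigma \<sigma> (\<lambda>s. (- \<alpha> / 2) * (u s + w s) + 0 * w s) d"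
    using inner_QFQ_shift_nonneg[OF acc d, of "\<alpha> / 2"] \<alpha>
      inner_sigma_cong_ae[OF L2_lincomb[OF L2_QFQ d, where p=1 and q="\<alpha> / 2"]
        L2_lincomb[OF uw w, where p="- \<alpha> / 2" and q=0] d, where \<sigma>=\<sigma>]
      inner_sigma_lincomb[OF L2_QFQ d d, where p=1 and q="\<alpha> / 2" and \<sigma>=\<sigma>]
    by simp
  also have "\<dots> = \<alpha> / 2 * (inner_sigma \<sigma> w w - inner_sigma \<sigma> u u)"
    using inner_sigma_lincomb[OF uw w d, where p="- \<alpha> / 2" and q=0 and \<sigma>=\<sigma>] inner_sigma_sum_diff[OF u w, where \<sigma>=\<sigma>]
    by (simp add: d_def[abs_def] algebra_simps)
  finally have "inner_sigma \<sigma> u u \<le> inner_sigma \<sigma> w w"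
    using \<alpha>0 by (simp add: zero_le_mult_iff)
  then have "norm_sigma \<sigma> u \<le> norm_sigma \<sigma> w"
    unfolding norm_sigma_def by (rule real_sqrt_le_mono)
  moreover have "norm_sigma \<sigma> w \<ge> 0" by (simp add: norm_sigma_def inner_sigma_self_nonneg)
  ultimately show ?thesis by linarith
qed

lemma resolvent_injective:
  assumes acc: "accretive \<sigma> QFQs" and \<alpha>: "\<alpha> \<ge> 16 * \<sigma> * norm0 x0 / real m"
    and u: "L2 u" and eq: "ae_eq01 (\<lambda>s. \<alpha> * u s + QFQ u s) (\<lambda>_. 0)"
  shows "ae_eq01 u (\<lambda>_. 0)"
proof -
  have "L2 (\<lambda>_::real. 0::real)" by (rule bounded_imp_L2[where K=0]) auto
  then have "norm_sigma \<sigma> u \<le> 0"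
    using resolvent_norm_le[OF acc \<alpha> u _ eq] by (simp add: norm_sigma_def inner_sigma_def)
  then have "inner_sigma \<sigma> u u = 0"
    using inner_sigma_self_nonneg[of \<sigma> u] by (simp add: norm_sigma_def)
  then show ?thesis by (rule ae_eq01_zero_if_inner_sigma_self_eq_0[OF u])
qed

text \<open>The cell integrals y of u solve a system with matrix \<alpha> Id + 2m\<kappa>, lower triangular with diagonal
  \<ge> \<alpha>; given y, u is recovered from \<alpha>u = v - QFQ u.\<close>
lemma resolvent_surjective:
  assumes \<alpha>: "\<alpha> > 0" and v: "L2 v"
  shows "\<exists>u. L2 u \<and> ae_eq01 (\<lambda>s. \<alpha> * u s + QFQ u s) v"
proof -
  define M where "M i j = (if i = j then \<alpha> else 0) + 2 * real m * conv_weight i j" for i j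
  have "M i i \<noteq> 0" for i
  proof -
    have "0 \<le> 2 * real m * conv_weight i i" by (simp add: conv_weight_nonneg)
    then show ?thesis using \<alpha> by (simp add: M_def)
  qed
  then obtain y where y: "\<And>i. i < m \<Longrightarrow> (\<Sum>j<m. M i j * y j) = cint v i"
    using lower_triangular_solvable[of M m "cint v"] conv_weight_upper_eq_0 by (auto simp: M_def)
  define g where "g i = 2 * real m ^ 2 * (\<Sum>j<m. y j * conv_weight i j)" for i
  define u where "u t = (1 / \<alpha>) * v t + (- 1 / \<alpha>) * g (cell_index m t)" for t
  have u: "L2 u" unfolding u_def by (rule L2_lincomb[OF v step_L2[OF m_ge_1]])
  have "cint u i = y i" if i: "i < m" for i
  proof -
    have "(\<Sum>j<m. (if i = j then \<alpha> else 0) * y j) = \<alpha> * y i"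
      using i by (simp add: if_distrib[of "\<lambda>x. x * _"] cong: if_cong)
    then have "(\<Sum>j<m. M i j * y j) = \<alpha> * y i + 2 * real m * (\<Sum>j<m. conv_weight i j * y j)"
      by (simp add: M_def distrib_right sum.distrib sum_distrib_left mult.assoc)
    also have "2 * real m * (\<Sum>j<m. conv_weight i j * y j) = g i / real m"
      using m_pos by (simp add: g_def power2_eq_square mult_ac)
    finally have "cint v i - g i / real m = \<alpha> * y i" using y[OF i] by linarith
    moreover have "cint u i = (cint v i - g i / real m) / \<alpha>"
      unfolding u_def cint_lincomb[OF v step_L2[OF m_ge_1, where \<gamma>=g] i] cint_step[OF i]
      by (simp add: diff_divide_distrib)
    ultimately have "cint u i = \<alpha> * y i / \<alpha>" by (simp only:)
    then show ?thesis using \<alpha> by simp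
  qed
  then have "QFQ u s = g (cell_index m s)" for s
    using cell_index_less[OF m_ge_1] by (simp add: QFQ_eq_sum g_def mult.commute)
  then have "\<alpha> * u s + QFQ u s = v s" for s
    unfolding u_def using \<alpha> by (simp add: algebra_simps)
  then show ?thesis using u unfolding ae_eq01_def by auto
qed

end

lemma W2inf_imp_continuous_on: "W2inf x \<Longrightarrow> continuous_on {0..1} x"
  unfolding W2inf_def continuous_on_eq_continuous_within using DERIV_continuous by blast

theorem corollary3p2:
  fixes x0 :: "real \<Rightarrow> real" and \<sigma> :: real and m :: nat
  assumes "W2inf x0"
    and "\<forall>t\<in>{0..1}. x0 t > 0" and "x0 0 > 0"
    and "\<sigma> > 0" and "real m \<ge> \<sigma>"
    and "accretive \<sigma> (\<lambda>v. Qms \<sigma> m (Fderiv x0 (Qms \<sigma> m v)))"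
  shows "accretive \<sigma> (\<lambda>v s. Qm m (Fderiv x0 (Qm m v)) s + 8 * \<sigma> * norm0 x0 / real m * v s)
    \<and> (\<forall>\<alpha>. \<alpha> \<ge> 16 * \<sigma> * norm0 x0 / real m \<longrightarrow>
           (\<forall>v. L2 v \<longrightarrow> (\<exists>u. L2 u \<and> ae_eq01 (\<lambda>s. \<alpha> * u s + Qm m (Fderiv x0 (Qm m u)) s) v))
         \<and> (\<forall>u. L2 u \<longrightarrow> ae_eq01 (\<lambda>s. \<alpha> * u s + Qm m (Fderiv x0 (Qm m u)) s) (\<lambda>s. 0)
                 \<longrightarrow> ae_eq01 u (\<lambda>s. 0))
         \<and> (\<forall>u v. L2 u \<longrightarrow> L2 v \<longrightarrow> ae_eq01 (\<lambda>s. \<alpha> * u s + Qm m (Fderiv x0 (Qm m u)) s) v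
                 \<longrightarrow> norm_sigma \<sigma> u \<le> 2 / \<alpha> * norm_sigma \<sigma> v)
         \<and> (\<forall>u w. L2 u \<longrightarrow> L2 w \<longrightarrow>
                 ae_eq01 (\<lambda>s. \<alpha> * u s + Qm m (Fderiv x0 (Qm m u)) s) (Qm m (Fderiv x0 (Qm m w)))
                 \<longrightarrow> norm_sigma \<sigma> u \<le> 2 * norm_sigma \<sigma> w))"
proof -
  interpret discretization x0 \<sigma> m
    using W2inf_imp_continuous_on[OF assms(1)] assms(2,4,5) by unfold_locales auto
  have acc: "accretive \<sigma> QFQs" using assms(6) by simp
  have "accretive \<sigma> (\<lambda>v s. QFQ v s + 8 * \<sigma> * norm0 x0 / real m * v s)"
    by (rule accretive_QFQ_shift[OF acc order_refl])
  moreover have "\<alpha> > 0" if "\<alpha> \<ge> 16 * \<sigma> * norm0 x0 / real m" for \<alpha>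
    using that accretivity_shift_pos by linarith
  ultimately show ?thesis
    using resolvent_surjective resolvent_injective[OF acc] resolvent_norm_le[OF acc]
      resolvent_QFQ_norm_le[OF acc]
    by blast
qed

end
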